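(* For any $\delta\in(0,1]$ there exists $b(\delta)>0$ such that for any $\varepsilon\in(0,b)$ there exist $C=C(\varepsilon,\delta)<\infty$ and $c=c(\varepsilon,\delta)>0$ such that the following holds. Let $G=(V,E)$ be a connected simple graph on $n$ vertices with minimal degree at least $\delta n$, and let $V=V_1\sqcup\dots\sqcup V_k$ be an $(\varepsilon,\delta,n^{1.5})$-good decomposition of $G$ with parameter $\theta$. Then for every set $W\subseteq V$ with $|W\cap V_i|\ge\varepsilon^8\theta\sqrt n$ for every $i\in[k]$, \[ \sum_{t=1}^\infty(t+1)\sup_{v\in V}\mathbf p^t_W(v,v)\le C. \]
   Context: $\mathbf p^t_W(v,v)=\Pr_v(X_t=v,\ \tau_W>t)$, where $X$ is the simple random walk on $G$ started at $v$ and $\tau_W$ is the hitting time of $W$. Writing $\deg(v,U)$ for the number of edges from $v$ to $U$, $E(A,B)$ for edges between $A,B$ and $G[U]$ for induced subgraphs, an $(\varepsilon,\delta,\beta)$-good decomposition $V=V_1\sqcup\dots\sqcup V_k$ with parameter $\theta\in[\varepsilon^{11\cdot2^{2/\delta}},\varepsilon]$ means, for all $i\in[k]$: $k\le2/\delta$; $|V_i|\ge\delta n/2$; the spectral gap ($1-\lambda_2$ of the simple random walk transition matrix) of $G[V_i]$ is at least $\frac{\delta^{15}\theta\beta}{2^{31}n^2}$; $\deg(v,V_i)\ge\delta^4n/40$ for $v\in V_i$; $|E(V_i,V\setminus V_i)|\le\varepsilon^9\theta^2\beta$. *)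

theory Defs
  imports Complex_Main "Jordan_Normal_Form.Char_Poly"
begin

definition simple_graph :: "nat set \<Rightarrow> (nat \<Rightarrow> nat \<Rightarrow> bool) \<Rightarrow> bool" where
  "simple_graph V E \<longleftrightarrow> finite V \<and> V \<noteq> {} \<and>
     (\<forall>u w. E u w \<longrightarrow> u \<in> V \<and> w \<in> V) \<and> (\<forall>u w. E u w \<longrightarrow> E w u) \<and> (\<forall>u. \<not> E u u)"

definition connected_graph :: "nat set \<Rightarrow> (nat \<Rightarrow> nat \<Rightarrow> bool) \<Rightarrow> bool" where
  "connected_graph V E \<longleftrightarrow> (\<forall>u\<in>V. \<forall>w\<in>V. (u, w) \<in> {(x, y). E x y}\<^sup>*)"

definition deg_into :: "(nat \<Rightarrow> nat \<Rightarrow> bool) \<Rightarrow> nat \<Rightarrow> nat set \<Rightarrow> nat" where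
  "deg_into E v U = card {u \<in> U. E v u}"

definition edges_between :: "(nat \<Rightarrow> nat \<Rightarrow> bool) \<Rightarrow> nat set \<Rightarrow> nat set \<Rightarrow> nat" where
  "edges_between E A B = card {(u, w). u \<in> A \<and> w \<in> B \<and> E u w}"

definition srw_trans :: "(nat \<Rightarrow> nat \<Rightarrow> bool) \<Rightarrow> nat set \<Rightarrow> nat \<Rightarrow> nat \<Rightarrow> real" where
  "srw_trans E U u w = (if u \<in> U \<and> w \<in> U \<and> E u w then 1 / real (deg_into E u U) else 0)"

text \<open>An (arbitrary) enumeration of a finite set by 0..<card U; the spectrum does not depend on it.\<close>
definition set_enum :: "nat set \<Rightarrow> nat \<Rightarrow> nat" where
  "set_enum U = (SOME f. bij_betw f {0..<card U} U)"

definition srw_matrix :: "(nat \<Rightarrow> nat \<Rightarrow> bool) \<Rightarrow> nat set \<Rightarrow> real mat" where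
  "srw_matrix E U = mat (card U) (card U)
     (\<lambda>(i, j). srw_trans E U (set_enum U i) (set_enum U j))"

text \<open>Second largest eigenvalue (counted with multiplicity): the largest real root \<lambda>
  of the characteristic polynomial such that at least two eigenvalues (with multiplicity)
  are \<ge> \<lambda>.\<close>
definition lambda2 :: "real mat \<Rightarrow> real" where
  "lambda2 A = Max {l. poly (char_poly A) l = 0 \<and>
      (\<Sum>m\<in>{m. poly (char_poly A) m = 0 \<and> m \<ge> l}. order m (char_poly A)) \<ge> 2}"

definition spectral_gap :: "(nat \<Rightarrow> nat \<Rightarrow> bool) \<Rightarrow> nat set \<Rightarrow> real" where
  "spectral_gap E U = 1 - lambda2 (srw_matrix E U)"

text \<open>Killed walk: killed_walk V E W v t x = Pr_v(X_t = x, tau_W > t) for the simple random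
  walk X on G = (V,E) started at v, where tau_W = min {s \<ge> 0. X_s \<in> W}.\<close>
primrec killed_walk :: "nat set \<Rightarrow> (nat \<Rightarrow> nat \<Rightarrow> bool) \<Rightarrow> nat set \<Rightarrow> nat \<Rightarrow> nat \<Rightarrow> nat \<Rightarrow> real" where
  "killed_walk V E W v 0 x = (if x = v \<and> x \<notin> W then 1 else 0)"
| "killed_walk V E W v (Suc t) x =
     (if x \<in> W then 0 else (\<Sum>u\<in>V. killed_walk V E W v t u * srw_trans E V u x))"

definition pW :: "nat set \<Rightarrow> (nat \<Rightarrow> nat \<Rightarrow> bool) \<Rightarrow> nat set \<Rightarrow> nat \<Rightarrow> nat \<Rightarrow> real" where
  "pW V E W t v = killed_walk V E W v t v"

definition good_decomposition ::
  "nat set \<Rightarrow> (nat \<Rightarrow> nat \<Rightarrow> bool) \<Rightarrow> real \<Rightarrow> real \<Rightarrow> real \<Rightarrow> real \<Rightarrow> nat \<Rightarrow> (nat \<Rightarrow> nat set) \<Rightarrow> bool" where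
  "good_decomposition V E \<epsilon> \<delta> \<beta> \<theta> k Vs \<longleftrightarrow>
     (let n = real (card V) in
      (\<Union>i<k. Vs i) = V \<and> (\<forall>i<k. \<forall>j<k. i \<noteq> j \<longrightarrow> Vs i \<inter> Vs j = {}) \<and>
      \<epsilon> powr (11 * 2 powr (2 / \<delta>)) \<le> \<theta> \<and> \<theta> \<le> \<epsilon> \<and>
      real k \<le> 2 / \<delta> \<and>
      (\<forall>i<k.
         real (card (Vs i)) \<ge> \<delta> * n / 2 \<and>
         spectral_gap E (Vs i) \<ge> \<delta>^15 * \<theta> * \<beta> / (2^31 * n^2) \<and>
         (\<forall>v\<in>Vs i. real (deg_into E v (Vs i)) \<ge> \<delta>^4 * n / 40) \<and>
         real (edges_between E (Vs i) (V - Vs i)) \<le> \<epsilon>^9 * \<theta>^2 * \<beta>))"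

end

theory Submission
  imports Defs "HOL-Analysis.Function_Topology" "HOL-Analysis.Convex"
begin

text \<open>The spectral gap of each part V_i gives a Poincare inequality on G[V_i]. For a function
  vanishing on W, which meets every part in at least eps^8 theta sqrt n vertices, each of degree
  of order n inside the part, it upgrades to a bound D(w) \<ge> (c / sqrt n) ||w||^2 of the
  Dirichlet form by the degree-weighted norm, first on each part and then, summing, on G.
  The densities h_t = p_W^t(v, .) / deg of the killed walk satisfy ||h_(t+1)||^2 = <A h_(t+1), h_t>
  for the adjacency form A, so that bound makes them contract:
  ||h_(t+1)||^2 \<le> (1 - c / sqrt n) ||h_t||^2. By Cauchy-Schwarz
  p_W^t(v, v) \<le> (1 - c / sqrt n)^(t/2) / (delta^(3/2) n), and summing (t + 1) times this bound
  gives O(n / c^2) / (delta^(3/2) n) = O(1).\<close>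

section \<open>Eigenvalues of multiplicity two\<close>

lemma independent_pair_nonzero:
  fixes v w :: "'a::field vec"
  assumes v: "v \<in> carrier_vec n" and w: "w \<in> carrier_vec n"
    and indep: "\<And>a b. a \<cdot>\<^sub>v v + b \<cdot>\<^sub>v w = 0\<^sub>v n \<Longrightarrow> a = 0 \<and> b = 0"
  shows "v \<noteq> 0\<^sub>v n" and "w \<noteq> 0\<^sub>v n"
proof -
  show "v \<noteq> 0\<^sub>v n"
  proof
    assume "v = 0\<^sub>v n"
    hence "1 \<cdot>\<^sub>v v + 0 \<cdot>\<^sub>v w = 0\<^sub>v n" using v w by (intro eq_vecI) auto
    from indep[OF this] show False by simp
  qed
  show "w \<noteq> 0\<^sub>v n"
  proof
    assume "w = 0\<^sub>v n"
    hence "0 \<cdot>\<^sub>v v + 1 \<cdot>\<^sub>v w = 0\<^sub>v n" using v w by (intro eq_vecI) auto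
    from indep[OF this] show False by simp
  qed
qed

lemma mat_delete_mult_vec_insert_index:
  fixes A :: "'a::field mat"
  assumes A: "A \<in> carrier_mat (Suc m) (Suc m)" and i: "i < Suc m" and j: "j < m"
    and z: "z \<in> carrier_vec (Suc m)" "z $ i = 0"
  shows "(mat_delete A i i *\<^sub>v vec m (\<lambda>j. z $ insert_index i j)) $ j = (A *\<^sub>v z) $ insert_index i j"
proof -
  have inj: "inj_on (insert_index i) {0..<m}" unfolding inj_on_def insert_index_def by auto
  have img: "insert_index i ` {0..<m} = {0..<Suc m} - {i}" using insert_index_image[OF i] .
  have ij: "insert_index i j < Suc m" using j unfolding insert_index_def by auto
  have "(mat_delete A i i *\<^sub>v vec m (\<lambda>j. z $ insert_index i j)) $ j
      = (\<Sum>k\<in>{0..<m}. A $$ (insert_index i j, insert_index i k) * z $ insert_index i k)"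
    using A i j by (simp add: mult_mat_vec_def scalar_prod_def mat_delete_index)
  also have "\<dots> = (\<Sum>k\<in>{0..<Suc m} - {i}. A $$ (insert_index i j, k) * z $ k)"
    using sum.reindex[OF inj, of "\<lambda>k. A $$ (insert_index i j, k) * z $ k"] img by simp
  also have "\<dots> = (\<Sum>k\<in>{0..<Suc m}. A $$ (insert_index i j, k) * z $ k)"
    using z(2) i by (subst (2) sum.remove[of _ i]) auto
  also have "\<dots> = (A *\<^sub>v z) $ insert_index i j"
    using A ij z(1) by (simp add: mult_mat_vec_def scalar_prod_def)
  finally show ?thesis .
qed

lemma eigenvalue_mat_delete:
  fixes A :: "'a::field mat"
  assumes A: "A \<in> carrier_mat n n" and i: "i < n"
    and z: "z \<in> carrier_vec n" "z \<noteq> 0\<^sub>v n" "z $ i = 0" "A *\<^sub>v z = e \<cdot>\<^sub>v z"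
  shows "eigenvalue (mat_delete A i i) e"
proof -
  obtain m where nm: "n = Suc m" using i by (cases n) auto
  define z' where "z' = vec m (\<lambda>j. z $ insert_index i j)"
  have B: "mat_delete A i i \<in> carrier_mat m m" using mat_delete_carrier[OF A] nm by auto
  have "\<exists>k<n. z $ k \<noteq> 0"
  proof (rule ccontr)
    assume "\<not> (\<exists>k<n. z $ k \<noteq> 0)"
    hence "z = 0\<^sub>v n" using z(1) by (intro eq_vecI) auto
    with z(2) show False by simp
  qed
  then obtain k where k: "k < n" "z $ k \<noteq> 0" by blast
  hence "k \<in> insert_index i ` {0..<m}" using insert_index_image[of i m] i z(3) nm by auto
  then obtain j where "j < m" "k = insert_index i j" by auto
  hence "z' $ j \<noteq> 0" using k unfolding z'_def by simp
  hence "z' \<noteq> 0\<^sub>v m" using \<open>j < m\<close> by auto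
  moreover have "mat_delete A i i *\<^sub>v z' = e \<cdot>\<^sub>v z'"
    by (rule eq_vecI) (use mat_delete_mult_vec_insert_index[of A m i _ z] A i z nm B
        in \<open>auto simp: z'_def insert_index_def\<close>)
  ultimately have "eigenvector (mat_delete A i i) z' e"
    unfolding eigenvector_def using A nm by (simp add: z'_def)
  thus ?thesis unfolding eigenvalue_def by blast
qed

lemma eigenvector_vanishing_at:
  fixes A :: "'a::field mat"
  assumes A: "A \<in> carrier_mat n n" and i: "i < n"
    and v: "v \<in> carrier_vec n" and w: "w \<in> carrier_vec n"
    and Av: "A *\<^sub>v v = e \<cdot>\<^sub>v v" and Aw: "A *\<^sub>v w = e \<cdot>\<^sub>v w"
    and indep: "\<And>a b. a \<cdot>\<^sub>v v + b \<cdot>\<^sub>v w = 0\<^sub>v n \<Longrightarrow> a = 0 \<and> b = 0"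
  obtains z where "z \<in> carrier_vec n" "z \<noteq> 0\<^sub>v n" "z $ i = 0" "A *\<^sub>v z = e \<cdot>\<^sub>v z"
proof (cases "v $ i = 0")
  case True
  thus ?thesis using that[of v] independent_pair_nonzero(1)[OF v w indep] v Av by auto
next
  case False
  define z where "z = (- (w $ i / v $ i)) \<cdot>\<^sub>v v + 1 \<cdot>\<^sub>v w"
  have "z \<in> carrier_vec n" using v w z_def by auto
  moreover have "z \<noteq> 0\<^sub>v n" using indep[of "- (w $ i / v $ i)" 1] z_def by auto
  moreover have "z $ i = 0" using False i v w unfolding z_def by auto
  moreover have "A *\<^sub>v z = e \<cdot>\<^sub>v z"
    unfolding z_def using A v w Av Aw
    by (simp add: mult_add_distrib_mat_vec mult_mat_vec smult_add_distrib_vec[of _ n]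
        smult_smult_assoc mult.commute)
  ultimately show ?thesis using that by blast
qed

lemma order_char_poly_ge_2:
  fixes A :: "'a::field_char_0 mat"
  assumes A: "A \<in> carrier_mat n n"
    and v: "v \<in> carrier_vec n" and w: "w \<in> carrier_vec n"
    and Av: "A *\<^sub>v v = e \<cdot>\<^sub>v v" and Aw: "A *\<^sub>v w = e \<cdot>\<^sub>v w"
    and indep: "\<And>a b. a \<cdot>\<^sub>v v + b \<cdot>\<^sub>v w = 0\<^sub>v n \<Longrightarrow> a = 0 \<and> b = 0"
  shows "order e (char_poly A) \<ge> 2"
proof -
  define p where "p = char_poly A"
  have p0: "p \<noteq> 0" and degp: "degree p = n"
    using degree_monic_char_poly[OF A] unfolding p_def by auto
  have "n \<noteq> 0" using independent_pair_nonzero(1)[OF v w indep] v by auto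
  \<comment> \<open>e is a root of every principal minor, hence of p' = (\<Sum>i<n. char_poly (mat_delete A i i))\<close>
  have "poly (char_poly (mat_delete A i i)) e = 0" if i: "i < n" for i
  proof -
    obtain z where "z \<in> carrier_vec n" "z \<noteq> 0\<^sub>v n" "z $ i = 0" "A *\<^sub>v z = e \<cdot>\<^sub>v z"
      using eigenvector_vanishing_at[OF A i v w Av Aw indep] .
    hence "eigenvalue (mat_delete A i i) e" by (rule eigenvalue_mat_delete[OF A i])
    thus ?thesis using eigenvalue_root_char_poly[OF mat_delete_carrier[OF A]] by simp
  qed
  hence "poly (pderiv p) e = 0" unfolding p_def pderiv_char_poly[OF A] poly_sum by simp
  moreover have "pderiv p \<noteq> 0" using degp \<open>n \<noteq> 0\<close> by (simp add: pderiv_eq_0_iff)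
  ultimately have "order e (pderiv p) \<noteq> 0" using order_root by blast
  moreover have "eigenvalue A e"
    unfolding eigenvalue_def eigenvector_def using A v Av independent_pair_nonzero(1)[OF v w indep] by auto
  hence "poly p e = 0" using eigenvalue_root_char_poly[OF A] p_def by simp
  ultimately show ?thesis using order_pderiv[OF p0] p_def by simp
qed

lemma lambda2_ge_root:
  fixes A :: "real mat"
  assumes A: "A \<in> carrier_mat n n" and root: "poly (char_poly A) l = 0"
    and mult: "(\<Sum>m\<in>{m. poly (char_poly A) m = 0 \<and> m \<ge> l}. order m (char_poly A)) \<ge> 2"
  shows "lambda2 A \<ge> l"
proof -
  have p0: "char_poly A \<noteq> 0" using degree_monic_char_poly[OF A] by auto
  have "finite {l. poly (char_poly A) l = 0 \<and>
      (\<Sum>m\<in>{m. poly (char_poly A) m = 0 \<and> m \<ge> l}. order m (char_poly A)) \<ge> 2}"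
    using poly_roots_finite[OF p0] by (rule finite_subset[rotated]) auto
  thus ?thesis unfolding lambda2_def using root mult by (intro Max_ge) auto
qed

lemma lambda2_ge_min_eigenvalues:
  fixes A :: "real mat"
  assumes A: "A \<in> carrier_mat n n"
    and v: "v \<in> carrier_vec n" and w: "w \<in> carrier_vec n"
    and Av: "A *\<^sub>v v = a \<cdot>\<^sub>v v" and Aw: "A *\<^sub>v w = b \<cdot>\<^sub>v w"
    and indep: "\<And>s t. s \<cdot>\<^sub>v v + t \<cdot>\<^sub>v w = 0\<^sub>v n \<Longrightarrow> s = 0 \<and> t = 0"
  shows "lambda2 A \<ge> min a b"
proof -
  define p where "p = char_poly A"
  have p0: "p \<noteq> 0" using degree_monic_char_poly[OF A] unfolding p_def by auto
  have "v \<noteq> 0\<^sub>v n" "w \<noteq> 0\<^sub>v n" using independent_pair_nonzero[OF v w indep] by auto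
  then have root_a: "poly p a = 0" and root_b: "poly p b = 0"
    using v w Av Aw eigenvalue_root_char_poly[OF A] A
    unfolding p_def eigenvalue_def eigenvector_def by auto
  define l where "l = min a b"
  have fin: "finite {m. poly p m = 0 \<and> m \<ge> l}"
    using poly_roots_finite[OF p0] by (rule finite_subset[rotated]) auto
  have "(\<Sum>m\<in>{m. poly p m = 0 \<and> m \<ge> l}. order m p) \<ge> 2"
  proof (cases "a = b")
    case True
    have "order a p \<ge> 2" unfolding p_def
      by (rule order_char_poly_ge_2[OF A v w Av]) (use Aw True indep in auto)
    also have "order a p \<le> (\<Sum>m\<in>{m. poly p m = 0 \<and> m \<ge> l}. order m p)"
      by (rule member_le_sum) (use fin root_a l_def in auto)
    finally show ?thesis .
  next
    case False
    have "order a p \<noteq> 0" "order b p \<noteq> 0" using order_root p0 root_a root_b by auto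
    hence "2 \<le> (\<Sum>m\<in>{a, b}. order m p)" using False by simp
    also have "\<dots> \<le> (\<Sum>m\<in>{m. poly p m = 0 \<and> m \<ge> l}. order m p)"
      by (rule sum_mono2) (use fin root_a root_b l_def in auto)
    finally show ?thesis .
  qed
  moreover have "poly p l = 0" using root_a root_b l_def by (auto simp: min_def)
  ultimately show ?thesis using lambda2_ge_root[OF A] unfolding p_def l_def by blast
qed

section \<open>Maximising a quadratic form on a weighted sphere\<close>

definition centered_unit_sphere :: "'a set \<Rightarrow> ('a \<Rightarrow> real) \<Rightarrow> ('a \<Rightarrow> real) set" where
  "centered_unit_sphere U d =
     {w. (\<forall>x. x \<notin> U \<longrightarrow> w x = 0) \<and> (\<Sum>x\<in>U. d x * w x) = 0 \<and> (\<Sum>x\<in>U. d x * (w x)^2) = 1}"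

lemma compact_centered_unit_sphere:
  fixes U :: "'a set" and d :: "'a \<Rightarrow> real"
  assumes U: "finite U" and dpos: "\<And>x. x \<in> U \<Longrightarrow> d x > 0"
  shows "compact (centered_unit_sphere U d)"
proof -
  define K where "K = centered_unit_sphere U d"
  define S where "S = (\<lambda>x. if x \<in> U then {- sqrt (1 / d x)..sqrt (1 / d x)} else {0::real})"
  have "compactin (product_topology (\<lambda>_. euclidean) UNIV) (Pi\<^sub>E UNIV S)"
    unfolding compactin_PiE by (auto simp: S_def)
  hence cS: "compact (Pi UNIV S)"
    by (simp add: euclidean_product_topology PiE_UNIV_domain)
  have "K \<subseteq> Pi UNIV S"
  proof (intro subsetI Pi_I)
    fix w x assume w: "w \<in> K"
    show "w x \<in> S x"
    proof (cases "x \<in> U")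
      case True
      have "d x * (w x)^2 \<le> (\<Sum>y\<in>U. d y * (w y)^2)"
        by (rule member_le_sum) (use True U in \<open>auto intro!: mult_nonneg_nonneg simp: dpos less_imp_le\<close>)
      hence "(w x)^2 \<le> 1 / d x"
        using w dpos[OF True] by (simp add: K_def centered_unit_sphere_def field_simps)
      hence "\<bar>w x\<bar> \<le> sqrt (1 / d x)" using real_sqrt_le_mono by fastforce
      thus ?thesis using True S_def by auto
    qed (use w in \<open>auto simp: K_def centered_unit_sphere_def S_def\<close>)
  qed
  moreover have "closed K"
  proof -
    have "K = (\<Inter>x\<in>-U. {w. w x = 0}) \<inter> {w. (\<Sum>x\<in>U. d x * w x) = 0}
              \<inter> {w. (\<Sum>x\<in>U. d x * (w x)^2) = 1}"
      unfolding K_def centered_unit_sphere_def by auto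
    moreover have "closed (\<Inter>x\<in>-U. {w::'a\<Rightarrow>real. w x = 0})"
      by (intro closed_INT ballI closed_Collect_eq continuous_intros continuous_on_product_coordinates)
    moreover have "closed {w::'a\<Rightarrow>real. (\<Sum>x\<in>U. d x * w x) = 0}"
      by (intro closed_Collect_eq continuous_intros continuous_on_product_coordinates)
    moreover have "closed {w::'a\<Rightarrow>real. (\<Sum>x\<in>U. d x * (w x)^2) = 1}"
      by (intro closed_Collect_eq continuous_intros continuous_on_product_coordinates)
    ultimately show ?thesis by auto
  qed
  ultimately show ?thesis
    using compact_Int_closed[OF cS, of K] unfolding K_def by (simp add: Int_absorb1)
qed

lemma exists_max_on_centered_unit_sphere:
  fixes U :: "'a set" and d :: "'a \<Rightarrow> real" and a :: "'a \<Rightarrow> 'a \<Rightarrow> real"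
  assumes U: "finite U" and dpos: "\<And>x. x \<in> U \<Longrightarrow> d x > 0"
    and ne: "centered_unit_sphere U d \<noteq> {}"
  shows "\<exists>u\<in>centered_unit_sphere U d. \<forall>w\<in>centered_unit_sphere U d.
           (\<Sum>x\<in>U. \<Sum>y\<in>U. a x y * w x * w y) \<le> (\<Sum>x\<in>U. \<Sum>y\<in>U. a x y * u x * u y)"
proof -
  have "continuous_on (centered_unit_sphere U d) (\<lambda>w. \<Sum>x\<in>U. \<Sum>y\<in>U. a x y * w x * w y)"
    by (intro continuous_intros continuous_on_subset[OF continuous_on_product_coordinates]) auto
  from continuous_attains_sup[OF compact_centered_unit_sphere[OF U dpos] ne this]
  show ?thesis by blast
qed

lemma weighted_sq_sum_eq_0_iff:
  fixes U :: "'a set" and d w :: "'a \<Rightarrow> real"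
  assumes U: "finite U" and dpos: "\<And>x. x \<in> U \<Longrightarrow> d x > 0"
  shows "(\<Sum>x\<in>U. d x * (w x)^2) = 0 \<longleftrightarrow> (\<forall>x\<in>U. w x = 0)"
  using sum_nonneg_eq_0_iff[OF U, of "\<lambda>x. d x * (w x)^2"] dpos
  by (auto simp: less_imp_le) (metis less_irrefl)

lemma centered_unit_sphere_normalize:
  fixes U :: "'a set" and d w :: "'a \<Rightarrow> real"
  assumes w: "\<forall>x. x \<notin> U \<longrightarrow> w x = 0" "(\<Sum>x\<in>U. d x * w x) = 0"
    and N: "(\<Sum>x\<in>U. d x * (w x)^2) > 0"
  shows "(\<lambda>x. w x / sqrt (\<Sum>x\<in>U. d x * (w x)^2)) \<in> centered_unit_sphere U d"
proof -
  define s where "s = sqrt (\<Sum>x\<in>U. d x * (w x)^2)"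
  have s: "s > 0" "s^2 = (\<Sum>x\<in>U. d x * (w x)^2)" using N s_def by auto
  have "(\<Sum>x\<in>U. d x * (w x / s)) = (\<Sum>x\<in>U. d x * w x) / s"
    by (simp add: sum_divide_distrib)
  moreover have "(\<Sum>x\<in>U. d x * (w x / s)^2) = (\<Sum>x\<in>U. d x * (w x)^2) / s^2"
    by (simp add: sum_divide_distrib power_divide)
  ultimately show ?thesis
    using w s unfolding centered_unit_sphere_def s_def[symmetric] by auto
qed

lemma quadratic_le_bound_on_centered_unit_sphere:
  fixes U :: "'a set" and d :: "'a \<Rightarrow> real" and a :: "'a \<Rightarrow> 'a \<Rightarrow> real"
  assumes U: "finite U" and dpos: "\<And>x. x \<in> U \<Longrightarrow> d x > 0"
    and M: "\<forall>u\<in>centered_unit_sphere U d. (\<Sum>x\<in>U. \<Sum>y\<in>U. a x y * u x * u y) \<le> M"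
    and w: "\<forall>x. x \<notin> U \<longrightarrow> w x = 0" "(\<Sum>x\<in>U. d x * w x) = 0"
  shows "(\<Sum>x\<in>U. \<Sum>y\<in>U. a x y * w x * w y) \<le> M * (\<Sum>x\<in>U. d x * (w x)^2)"
proof -
  define N where "N = (\<Sum>x\<in>U. d x * (w x)^2)"
  have "N \<ge> 0" unfolding N_def using dpos by (intro sum_nonneg) (simp add: less_imp_le)
  moreover have "(\<Sum>x\<in>U. \<Sum>y\<in>U. a x y * w x * w y) \<le> M * N" if "N > 0"
  proof -
    have "(\<Sum>x\<in>U. \<Sum>y\<in>U. a x y * (w x / sqrt N) * (w y / sqrt N)) \<le> M"
      using bspec[OF M centered_unit_sphere_normalize[OF w that[unfolded N_def]]]
      unfolding N_def by simp
    moreover have "(\<Sum>x\<in>U. \<Sum>y\<in>U. a x y * (w x / sqrt N) * (w y / sqrt N))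
        = (\<Sum>x\<in>U. \<Sum>y\<in>U. a x y * w x * w y) / N"
      using that by (simp add: sum_divide_distrib real_sqrt_mult[symmetric])
    ultimately show ?thesis using that by (simp add: pos_divide_le_eq mult.commute)
  qed
  moreover have "(\<Sum>x\<in>U. \<Sum>y\<in>U. a x y * w x * w y) = 0" if "N = 0"
    using that weighted_sq_sum_eq_0_iff[OF U dpos] unfolding N_def by simp
  ultimately show ?thesis unfolding N_def by force
qed

lemma linear_coeff_eq_0_if_quadratic_nonpos:
  fixes \<alpha> \<beta> :: real
  assumes "\<And>t. 2 * t * \<alpha> + t^2 * \<beta> \<le> 0"
  shows "\<alpha> = 0"
proof (rule ccontr)
  assume "\<alpha> \<noteq> 0"
  define t where "t = \<alpha> / (\<bar>\<beta>\<bar> + 1)"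
  have \<alpha>: "\<alpha> = t * (\<bar>\<beta>\<bar> + 1)" unfolding t_def by simp
  have "t \<noteq> 0" using \<open>\<alpha> \<noteq> 0\<close> \<alpha> by auto
  hence "t^2 * (2 * \<bar>\<beta>\<bar> + 2 + \<beta>) > 0" by (intro mult_pos_pos) (auto simp: abs_if)
  moreover have "2 * t * \<alpha> + t^2 * \<beta> = t^2 * (2 * \<bar>\<beta>\<bar> + 2 + \<beta>)"
    unfolding \<alpha> by (simp add: algebra_simps power2_eq_square)
  ultimately show False using assms[of t] by simp
qed

lemma quadratic_form_add_scaled:
  fixes a :: "'a \<Rightarrow> 'a \<Rightarrow> real"
  assumes sym: "\<And>x y. a x y = a y x"
  shows "(\<Sum>x\<in>U. \<Sum>y\<in>U. a x y * (u x + t * v x) * (u y + t * v y))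
    = (\<Sum>x\<in>U. \<Sum>y\<in>U. a x y * u x * u y) + 2 * t * (\<Sum>x\<in>U. \<Sum>y\<in>U. a x y * u x * v y)
      + t^2 * (\<Sum>x\<in>U. \<Sum>y\<in>U. a x y * v x * v y)"
proof -
  have swap: "(\<Sum>x\<in>U. \<Sum>y\<in>U. a x y * v x * u y) = (\<Sum>x\<in>U. \<Sum>y\<in>U. a x y * u x * v y)"
    by (subst sum.swap) (simp add: sym mult.commute mult.left_commute)
  have "(\<Sum>x\<in>U. \<Sum>y\<in>U. a x y * (u x + t * v x) * (u y + t * v y))
      = (\<Sum>x\<in>U. \<Sum>y\<in>U. a x y * u x * u y + t * (a x y * u x * v y)
          + t * (a x y * v x * u y) + t^2 * (a x y * v x * v y))"
    by (intro sum.cong refl) (simp add: algebra_simps power2_eq_square)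
  also have "\<dots> = (\<Sum>x\<in>U. \<Sum>y\<in>U. a x y * u x * u y) + t * (\<Sum>x\<in>U. \<Sum>y\<in>U. a x y * u x * v y)
      + t * (\<Sum>x\<in>U. \<Sum>y\<in>U. a x y * v x * u y) + t^2 * (\<Sum>x\<in>U. \<Sum>y\<in>U. a x y * v x * v y)"
    by (simp add: sum.distrib sum_distrib_left)
  finally show ?thesis unfolding swap by simp
qed

lemma weighted_sq_sum_add_scaled:
  fixes d :: "'a \<Rightarrow> real"
  shows "(\<Sum>x\<in>U. d x * (u x + t * v x)^2)
    = (\<Sum>x\<in>U. d x * (u x)^2) + 2 * t * (\<Sum>x\<in>U. d x * u x * v x) + t^2 * (\<Sum>x\<in>U. d x * (v x)^2)"
proof -
  have "(\<Sum>x\<in>U. d x * (u x + t * v x)^2)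
      = (\<Sum>x\<in>U. d x * (u x)^2 + 2 * t * (d x * u x * v x) + t^2 * (d x * (v x)^2))"
    by (intro sum.cong refl) (simp add: algebra_simps power2_eq_square)
  thus ?thesis by (simp add: sum.distrib sum_distrib_left)
qed

lemma first_variation_on_centered_unit_sphere:
  fixes U :: "'a set" and d :: "'a \<Rightarrow> real" and a :: "'a \<Rightarrow> 'a \<Rightarrow> real"
  assumes U: "finite U" and dpos: "\<And>x. x \<in> U \<Longrightarrow> d x > 0" and sym: "\<And>x y. a x y = a y x"
    and u: "u \<in> centered_unit_sphere U d"
    and max: "\<forall>w\<in>centered_unit_sphere U d.
                (\<Sum>x\<in>U. \<Sum>y\<in>U. a x y * w x * w y) \<le> (\<Sum>x\<in>U. \<Sum>y\<in>U. a x y * u x * u y)"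
    and v: "\<forall>x. x \<notin> U \<longrightarrow> v x = 0" "(\<Sum>x\<in>U. d x * v x) = 0"
  shows "(\<Sum>x\<in>U. v x * ((\<Sum>y\<in>U. a x y * u y) - (\<Sum>x\<in>U. \<Sum>y\<in>U. a x y * u x * u y) * d x * u x)) = 0"
proof -
  let ?F = "\<lambda>w. \<Sum>x\<in>U. \<Sum>y\<in>U. a x y * w x * w y"
  let ?N = "\<lambda>w. \<Sum>x\<in>U. d x * (w x)^2"
  define M where "M = ?F u"
  define B where "B = (\<Sum>x\<in>U. \<Sum>y\<in>U. a x y * u x * v y)"
  define C where "C = (\<Sum>x\<in>U. d x * u x * v x)"
  have u0: "\<forall>x. x \<notin> U \<longrightarrow> u x = 0" "(\<Sum>x\<in>U. d x * u x) = 0" "?N u = 1"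
    using u unfolding centered_unit_sphere_def by auto
  \<comment> \<open>u + t v stays in the centered subspace, where F is at most M times the squared norm\<close>
  have "?F (\<lambda>x. u x + t * v x) \<le> M * ?N (\<lambda>x. u x + t * v x)" for t
    using quadratic_le_bound_on_centered_unit_sphere[OF U dpos, where a = a and M = M
        and w = "\<lambda>x. u x + t * v x"] max u0 v
    unfolding M_def by (auto simp: algebra_simps sum.distrib sum_distrib_left[symmetric])
  hence "2 * t * (B - M * C) + t^2 * (?F v - M * ?N v) \<le> 0" for t
    unfolding quadratic_form_add_scaled[OF sym] weighted_sq_sum_add_scaled u0(3)
    by (simp add: M_def B_def C_def algebra_simps)
  hence "B - M * C = 0" by (rule linear_coeff_eq_0_if_quadratic_nonpos)
  moreover have "(\<Sum>x\<in>U. v x * ((\<Sum>y\<in>U. a x y * u y) - M * d x * u x)) = B - M * C"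
  proof -
    have "(\<Sum>x\<in>U. v x * ((\<Sum>y\<in>U. a x y * u y) - M * d x * u x))
        = (\<Sum>x\<in>U. \<Sum>y\<in>U. a x y * v x * u y) - M * C"
      unfolding C_def
      by (simp add: sum_subtractf sum_distrib_left sum_distrib_right algebra_simps)
    also have "(\<Sum>x\<in>U. \<Sum>y\<in>U. a x y * v x * u y) = B"
      unfolding B_def by (subst sum.swap) (simp add: sym mult.commute mult.left_commute)
    finally show ?thesis .
  qed
  ultimately show ?thesis unfolding M_def by simp
qed

lemma max_on_centered_unit_sphere_eigen:
  fixes U :: "'a set" and d :: "'a \<Rightarrow> real" and a :: "'a \<Rightarrow> 'a \<Rightarrow> real"
  assumes U: "finite U" and dpos: "\<And>x. x \<in> U \<Longrightarrow> d x > 0" and sym: "\<And>x y. a x y = a y x"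
    and row_sum: "\<And>x. x \<in> U \<Longrightarrow> d x = (\<Sum>y\<in>U. a x y)"
    and u: "u \<in> centered_unit_sphere U d"
    and max: "\<forall>w\<in>centered_unit_sphere U d.
                (\<Sum>x\<in>U. \<Sum>y\<in>U. a x y * w x * w y) \<le> (\<Sum>x\<in>U. \<Sum>y\<in>U. a x y * u x * u y)"
    and x: "x \<in> U"
  shows "(\<Sum>y\<in>U. a x y * u y) = (\<Sum>x\<in>U. \<Sum>y\<in>U. a x y * u x * u y) * d x * u x"
proof -
  define M where "M = (\<Sum>x\<in>U. \<Sum>y\<in>U. a x y * u x * u y)"
  define z where "z = (\<lambda>x. (\<Sum>y\<in>U. a x y * u y) - M * d x * u x)"
  have u0: "(\<Sum>x\<in>U. d x * u x) = 0" using u unfolding centered_unit_sphere_def by auto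
  \<comment> \<open>z is d-orthogonal to the constants, so it is an admissible variation after dividing by d\<close>
  have "(\<Sum>x\<in>U. z x) = (\<Sum>x\<in>U. \<Sum>y\<in>U. a x y * u y) - M * (\<Sum>x\<in>U. d x * u x)"
    unfolding z_def by (simp add: sum_subtractf sum_distrib_left algebra_simps)
  also have "(\<Sum>x\<in>U. \<Sum>y\<in>U. a x y * u y) = (\<Sum>y\<in>U. d y * u y)"
    by (subst sum.swap) (simp add: row_sum sym sum_distrib_right[symmetric] cong: sum.cong)
  finally have sum_z: "(\<Sum>x\<in>U. z x) = 0" using u0 by simp
  define v where "v = (\<lambda>x. if x \<in> U then z x / d x else 0)"
  have "(\<Sum>x\<in>U. d x * v x) = (\<Sum>x\<in>U. z x)"
    by (rule sum.cong) (simp_all add: v_def less_imp_neq[OF dpos, symmetric])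
  hence "(\<Sum>x\<in>U. v x * z x) = 0"
    using first_variation_on_centered_unit_sphere[OF U dpos sym u max, of v] sum_z
    unfolding z_def M_def by (simp add: v_def)
  hence "(\<Sum>x\<in>U. (z x)^2 / d x) = 0"
    by (simp add: v_def power2_eq_square cong: sum.cong)
  hence "\<forall>x\<in>U. (z x)^2 / d x = 0"
    using sum_nonneg_eq_0_iff[OF U, of "\<lambda>x. (z x)^2 / d x"] dpos by (simp add: less_imp_le)
  hence "z x = 0" using x dpos[OF x] by (metis divide_eq_0_iff less_irrefl power_eq_0_iff)
  thus ?thesis unfolding z_def M_def by simp
qed

section \<open>Spectral gap and Poincare inequality of a graph\<close>

definition adj :: "(nat \<Rightarrow> nat \<Rightarrow> bool) \<Rightarrow> nat \<Rightarrow> nat \<Rightarrow> real" where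
  "adj E x y = (if E x y then 1 else 0)"

definition adj_form :: "(nat \<Rightarrow> nat \<Rightarrow> bool) \<Rightarrow> nat set \<Rightarrow> (nat \<Rightarrow> real) \<Rightarrow> (nat \<Rightarrow> real) \<Rightarrow> real" where
  "adj_form E U f g = (\<Sum>x\<in>U. \<Sum>y\<in>U. adj E x y * f x * g y)"

definition deg_sq_norm :: "(nat \<Rightarrow> nat \<Rightarrow> bool) \<Rightarrow> nat set \<Rightarrow> (nat \<Rightarrow> real) \<Rightarrow> real" where
  "deg_sq_norm E U f = (\<Sum>x\<in>U. real (deg_into E x U) * (f x)^2)"

definition dirichlet_form :: "(nat \<Rightarrow> nat \<Rightarrow> bool) \<Rightarrow> nat set \<Rightarrow> (nat \<Rightarrow> real) \<Rightarrow> real" where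
  "dirichlet_form E U f = (\<Sum>x\<in>U. \<Sum>y\<in>U. adj E x y * (f x - f y)^2) / 2"

lemma adj_nonneg: "adj E x y \<ge> 0" and adj_le_1: "adj E x y \<le> 1"
  unfolding adj_def by auto

lemma adj_commute: "\<forall>x y. E x y \<longrightarrow> E y x \<Longrightarrow> adj E x y = adj E y x"
  unfolding adj_def by auto

lemma deg_into_eq_sum_adj: "finite U \<Longrightarrow> real (deg_into E x U) = (\<Sum>y\<in>U. adj E x y)"
  unfolding deg_into_def adj_def by (simp add: sum.If_cases Int_def conj_commute)

lemma deg_into_le_card: "finite U \<Longrightarrow> deg_into E x U \<le> card U"
  unfolding deg_into_def by (intro card_mono) auto

lemma deg_sq_norm_nonneg: "deg_sq_norm E U f \<ge> 0"
  unfolding deg_sq_norm_def by (intro sum_nonneg mult_nonneg_nonneg) auto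

lemma set_enum_bij: "finite U \<Longrightarrow> bij_betw (set_enum U) {0..<card U} U"
  unfolding set_enum_def by (rule someI_ex[OF ex_bij_betw_nat_finite])

lemma srw_matrix_carrier: "srw_matrix E U \<in> carrier_mat (card U) (card U)"
  unfolding srw_matrix_def by simp

lemma srw_matrix_eigenvector:
  assumes U: "finite U" and dpos: "\<forall>x\<in>U. deg_into E x U > 0"
    and eig: "\<And>x. x \<in> U \<Longrightarrow> (\<Sum>y\<in>U. adj E x y * u y) = M * real (deg_into E x U) * u x"
  shows "srw_matrix E U *\<^sub>v vec (card U) (\<lambda>j. u (set_enum U j))
       = M \<cdot>\<^sub>v vec (card U) (\<lambda>j. u (set_enum U j))"
proof (rule eq_vecI)
  fix i assume "i < dim_vec (M \<cdot>\<^sub>v vec (card U) (\<lambda>j. u (set_enum U j)))"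
  hence i: "i < card U" by simp
  define x where "x = set_enum U i"
  have x: "x \<in> U" using set_enum_bij[OF U] i unfolding x_def bij_betw_def by auto
  have "(srw_matrix E U *\<^sub>v vec (card U) (\<lambda>j. u (set_enum U j))) $ i
      = (\<Sum>j\<in>{0..<card U}. srw_trans E U x (set_enum U j) * u (set_enum U j))"
    using i by (simp add: srw_matrix_def mult_mat_vec_def scalar_prod_def x_def)
  also have "\<dots> = (\<Sum>y\<in>U. srw_trans E U x y * u y)"
    by (rule sum.reindex_bij_betw[OF set_enum_bij[OF U]])
  also have "\<dots> = (\<Sum>y\<in>U. adj E x y * u y) / real (deg_into E x U)"
    unfolding sum_divide_distrib by (rule sum.cong) (use x in \<open>auto simp: srw_trans_def adj_def\<close>)
  also have "\<dots> = M * u x" using eig[OF x] dpos x by fastforce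
  finally show "(srw_matrix E U *\<^sub>v vec (card U) (\<lambda>j. u (set_enum U j))) $ i
      = (M \<cdot>\<^sub>v vec (card U) (\<lambda>j. u (set_enum U j))) $ i"
    using i x_def by simp
qed (simp add: srw_matrix_def)

text \<open>The constants are an eigenvector for 1, and a degree-centered eigenvector cannot be
  proportional to them.\<close>
lemma lambda2_srw_matrix_ge:
  assumes U: "finite U" and dpos: "\<forall>x\<in>U. deg_into E x U > 0"
    and eig: "\<And>x. x \<in> U \<Longrightarrow> (\<Sum>y\<in>U. adj E x y * u y) = M * real (deg_into E x U) * u x"
    and centered: "(\<Sum>x\<in>U. real (deg_into E x U) * u x) = 0"
    and x0: "x0 \<in> U" "u x0 \<noteq> 0"
  shows "lambda2 (srw_matrix E U) \<ge> min M 1"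
proof -
  define n where "n = card U"
  define vec_of :: "(nat \<Rightarrow> real) \<Rightarrow> real vec" where "vec_of = (\<lambda>g. vec n (\<lambda>j. g (set_enum U j)))"
  have bij: "bij_betw (set_enum U) {0..<n} U" using set_enum_bij[OF U] n_def by simp
  have Pu: "srw_matrix E U *\<^sub>v vec_of u = M \<cdot>\<^sub>v vec_of u"
    unfolding vec_of_def n_def by (rule srw_matrix_eigenvector[OF U dpos eig])
  have P1: "srw_matrix E U *\<^sub>v vec_of (\<lambda>_. 1) = 1 \<cdot>\<^sub>v vec_of (\<lambda>_. 1)"
    unfolding vec_of_def n_def
    by (rule srw_matrix_eigenvector[OF U dpos]) (simp add: deg_into_eq_sum_adj[OF U])
  have indep: "a = 0 \<and> b = 0" if ab: "a \<cdot>\<^sub>v vec_of (\<lambda>_. 1) + b \<cdot>\<^sub>v vec_of u = 0\<^sub>v n" for a b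
  proof -
    have pt: "a + b * u x = 0" if x: "x \<in> U" for x
    proof -
      obtain i where "i < n" "set_enum U i = x"
        using bij x unfolding bij_betw_def by (metis atLeastLessThan_iff imageE)
      with arg_cong[OF ab, of "\<lambda>z. z $ i"] show ?thesis by (simp add: vec_of_def)
    qed
    have "(\<Sum>x\<in>U. real (deg_into E x U) * (a + b * u x)) = 0" using pt by simp
    hence "a * (\<Sum>x\<in>U. real (deg_into E x U)) + b * (\<Sum>x\<in>U. real (deg_into E x U) * u x) = 0"
      by (simp add: algebra_simps sum.distrib sum_distrib_left)
    hence "a * (\<Sum>x\<in>U. real (deg_into E x U)) = 0" using centered by simp
    moreover have "(\<Sum>x\<in>U. real (deg_into E x U)) > 0"
      using dpos x0 U by (intro sum_pos2[of U x0]) auto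
    ultimately have "a = 0" by simp
    thus ?thesis using pt[OF x0(1)] x0(2) by simp
  qed
  have "lambda2 (srw_matrix E U) \<ge> min 1 M"
    by (rule lambda2_ge_min_eigenvalues[OF srw_matrix_carrier[of E U, folded n_def] _ _ P1 Pu indep])
      (auto simp: vec_of_def)
  thus ?thesis by (simp add: min.commute)
qed

text \<open>By the variational characterisation, a degree-centered f with a larger Rayleigh quotient
  would produce a second eigenvalue above 1 - gamma.\<close>
lemma adj_form_le_of_spectral_gap:
  assumes U: "finite U" and dpos: "\<forall>x\<in>U. deg_into E x U > 0"
    and sym: "\<forall>x y. E x y \<longrightarrow> E y x"
    and gap: "spectral_gap E U \<ge> \<gamma>" and \<gamma>: "\<gamma> > 0"
    and f: "(\<Sum>x\<in>U. real (deg_into E x U) * f x) = 0"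
  shows "adj_form E U f f \<le> (1 - \<gamma>) * deg_sq_norm E U f"
proof -
  define d where "d = (\<lambda>x. real (deg_into E x U))"
  have dp: "\<And>x. x \<in> U \<Longrightarrow> d x > 0" using dpos d_def by auto
  let ?F = "\<lambda>w. \<Sum>x\<in>U. \<Sum>y\<in>U. adj E x y * w x * w y"
  have sphere_bound: "\<forall>u\<in>centered_unit_sphere U d. ?F u \<le> 1 - \<gamma>"
  proof (rule ccontr)
    assume "\<not> ?thesis"
    then obtain w where w: "w \<in> centered_unit_sphere U d" and big: "1 - \<gamma> < ?F w" by auto
    hence "centered_unit_sphere U d \<noteq> {}" by auto
    then obtain u where u: "u \<in> centered_unit_sphere U d"
      and max: "\<forall>w\<in>centered_unit_sphere U d. ?F w \<le> ?F u"
      using exists_max_on_centered_unit_sphere[where d = d and a = "adj E", OF U dp] by blast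
    have "(\<Sum>x\<in>U. d x * (u x)^2) = 1" using u unfolding centered_unit_sphere_def by simp
    then obtain x0 where x0: "x0 \<in> U" "u x0 \<noteq> 0" using weighted_sq_sum_eq_0_iff[where d = d and w = u, OF U dp] by auto
    have "lambda2 (srw_matrix E U) \<ge> min (?F u) 1"
    proof (rule lambda2_srw_matrix_ge[where u = u and M = "?F u", OF U dpos _ _ x0])
      show "(\<Sum>y\<in>U. adj E x y * u y) = ?F u * real (deg_into E x U) * u x" if "x \<in> U" for x
        using max_on_centered_unit_sphere_eigen[where d = d and a = "adj E", OF U dp _ _ u max that]
          adj_commute[OF sym] deg_into_eq_sum_adj[OF U] unfolding d_def by blast
      show "(\<Sum>x\<in>U. real (deg_into E x U) * u x) = 0"
        using u unfolding centered_unit_sphere_def d_def by simp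
    qed
    moreover have "?F u > 1 - \<gamma>" using big max w by force
    ultimately show False using gap \<gamma> unfolding spectral_gap_def by simp
  qed
  define f' where "f' = (\<lambda>x. if x \<in> U then f x else 0)"
  have "?F f' \<le> (1 - \<gamma>) * (\<Sum>x\<in>U. d x * (f' x)^2)"
    by (rule quadratic_le_bound_on_centered_unit_sphere[where d = d and a = "adj E",
          OF U dp sphere_bound]) (use f in \<open>auto simp: f'_def d_def cong: sum.cong\<close>)
  thus ?thesis unfolding adj_form_def deg_sq_norm_def f'_def d_def by (simp cong: sum.cong)
qed

section \<open>Dirichlet form of functions vanishing on a set\<close>

lemma dirichlet_form_eq:
  assumes U: "finite U" and sym: "\<forall>x y. E x y \<longrightarrow> E y x"
  shows "dirichlet_form E U w = deg_sq_norm E U w - adj_form E U w w"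
proof -
  have "(\<Sum>x\<in>U. \<Sum>y\<in>U. adj E x y * (w x - w y)^2)
      = (\<Sum>x\<in>U. \<Sum>y\<in>U. adj E x y * (w x)^2) + (\<Sum>x\<in>U. \<Sum>y\<in>U. adj E x y * (w y)^2)
        - 2 * (\<Sum>x\<in>U. \<Sum>y\<in>U. adj E x y * w x * w y)"
    by (simp add: power2_diff algebra_simps sum.distrib sum_subtractf sum_distrib_left)
  also have "(\<Sum>x\<in>U. \<Sum>y\<in>U. adj E x y * (w y)^2) = (\<Sum>x\<in>U. \<Sum>y\<in>U. adj E x y * (w x)^2)"
    by (subst sum.swap) (simp add: adj_commute[OF sym])
  also have "(\<Sum>x\<in>U. \<Sum>y\<in>U. adj E x y * (w x)^2) = deg_sq_norm E U w"
    by (simp add: deg_sq_norm_def deg_into_eq_sum_adj[OF U] sum_distrib_right)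
  finally show ?thesis unfolding dirichlet_form_def adj_form_def by simp
qed

lemma dirichlet_form_diff_const: "dirichlet_form E U (\<lambda>x. w x - c) = dirichlet_form E U w"
  unfolding dirichlet_form_def by simp

lemma dirichlet_form_ge_boundary:
  assumes U: "finite U" and sym: "\<forall>x y. E x y \<longrightarrow> E y x" and Wp: "Wp \<subseteq> U"
    and w0: "\<And>x. x \<in> Wp \<Longrightarrow> w x = 0"
  shows "dirichlet_form E U w \<ge> (\<Sum>x\<in>U. (\<Sum>y\<in>Wp. adj E x y) * (w x)^2)"
proof -
  let ?t = "\<lambda>x y. adj E x y * (w x - w y)^2"
  have t0: "\<And>x y. ?t x y \<ge> 0" by (simp add: adj_nonneg)
  have inner: "(\<Sum>x\<in>U. \<Sum>y\<in>Wp. ?t x y) = (\<Sum>x\<in>U. (\<Sum>y\<in>Wp. adj E x y) * (w x)^2)"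
    by (simp add: w0 sum_distrib_right)
  \<comment> \<open>the edges leaving Wp, counted from their endpoint in Wp, give the same sum again\<close>
  have "(\<Sum>x\<in>U. \<Sum>y\<in>U - Wp. ?t x y) \<ge> (\<Sum>x\<in>Wp. \<Sum>y\<in>U - Wp. ?t x y)"
    by (rule sum_mono2[OF U Wp]) (auto intro: sum_nonneg t0)
  also have "(\<Sum>x\<in>Wp. \<Sum>y\<in>U - Wp. ?t x y) = (\<Sum>y\<in>U - Wp. (\<Sum>x\<in>Wp. adj E y x) * (w y)^2)"
    by (subst sum.swap) (simp add: w0 sum_distrib_right adj_commute[OF sym])
  also have "\<dots> = (\<Sum>y\<in>U. (\<Sum>x\<in>Wp. adj E y x) * (w y)^2)"
    using sum.subset_diff[OF Wp U, of "\<lambda>y. (\<Sum>x\<in>Wp. adj E y x) * (w y)^2"] by (simp add: w0)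
  finally have outer: "(\<Sum>x\<in>U. \<Sum>y\<in>U - Wp. ?t x y) \<ge> (\<Sum>x\<in>U. (\<Sum>y\<in>Wp. adj E x y) * (w x)^2)" .
  have "(\<Sum>y\<in>U. ?t x y) = (\<Sum>y\<in>Wp. ?t x y) + (\<Sum>y\<in>U - Wp. ?t x y)" for x
    using sum.subset_diff[OF Wp U, of "\<lambda>y. ?t x y"] by (simp add: add.commute)
  hence "(\<Sum>x\<in>U. \<Sum>y\<in>U. ?t x y) = (\<Sum>x\<in>U. \<Sum>y\<in>Wp. ?t x y) + (\<Sum>x\<in>U. \<Sum>y\<in>U - Wp. ?t x y)"
    by (simp add: sum.distrib)
  thus ?thesis using inner outer unfolding dirichlet_form_def by simp
qed

lemma weighted_sq_sum_decompose:
  fixes d w :: "'a \<Rightarrow> real"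
  assumes T: "(\<Sum>x\<in>U. d x) \<noteq> 0"
  defines "\<mu> \<equiv> (\<Sum>x\<in>U. d x * w x) / (\<Sum>x\<in>U. d x)"
  shows "(\<Sum>x\<in>U. d x * (w x - \<mu>)) = 0"
    and "(\<Sum>x\<in>U. d x * (w x)^2) = (\<Sum>x\<in>U. d x * (w x - \<mu>)^2) + \<mu>^2 * (\<Sum>x\<in>U. d x)"
proof -
  have "(\<Sum>x\<in>U. d x * (w x - \<mu>)) = (\<Sum>x\<in>U. d x * w x) - (\<Sum>x\<in>U. d x) * \<mu>"
    by (simp add: right_diff_distrib sum_subtractf sum_distrib_right)
  thus centered: "(\<Sum>x\<in>U. d x * (w x - \<mu>)) = 0" using T unfolding \<mu>_def by simp
  have "(\<Sum>x\<in>U. d x * (w x)^2)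
      = (\<Sum>x\<in>U. d x * (w x - \<mu>)^2 + 2 * \<mu> * (d x * (w x - \<mu>)) + \<mu>^2 * d x)"
    by (rule sum.cong) (auto simp: power2_eq_square algebra_simps)
  also have "\<dots> = (\<Sum>x\<in>U. d x * (w x - \<mu>)^2) + \<mu>^2 * (\<Sum>x\<in>U. d x)"
    by (simp add: sum.distrib sum_distrib_left[symmetric] centered)
  finally show "(\<Sum>x\<in>U. d x * (w x)^2) = (\<Sum>x\<in>U. d x * (w x - \<mu>)^2) + \<mu>^2 * (\<Sum>x\<in>U. d x)" .
qed

lemma dirichlet_form_ge_gap_fluctuation:
  fixes w :: "nat \<Rightarrow> real"
  assumes U: "finite U" "U \<noteq> {}" and dpos: "\<forall>x\<in>U. deg_into E x U > 0"
    and sym: "\<forall>x y. E x y \<longrightarrow> E y x"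
    and gap: "spectral_gap E U \<ge> \<gamma>" and \<gamma>: "\<gamma> > 0"
  defines "\<mu> \<equiv> (\<Sum>x\<in>U. real (deg_into E x U) * w x) / (\<Sum>x\<in>U. real (deg_into E x U))"
  shows "dirichlet_form E U w \<ge> \<gamma> * deg_sq_norm E U (\<lambda>x. w x - \<mu>)"
proof -
  have "(\<Sum>x\<in>U. real (deg_into E x U)) > 0"
    using U dpos by (intro sum_pos) auto
  hence "(\<Sum>x\<in>U. real (deg_into E x U) * (w x - \<mu>)) = 0"
    unfolding \<mu>_def by (intro weighted_sq_sum_decompose(1)) simp
  hence "adj_form E U (\<lambda>x. w x - \<mu>) (\<lambda>x. w x - \<mu>) \<le> (1 - \<gamma>) * deg_sq_norm E U (\<lambda>x. w x - \<mu>)"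
    by (rule adj_form_le_of_spectral_gap[OF U(1) dpos sym gap \<gamma>])
  thus ?thesis
    using dirichlet_form_eq[OF U(1) sym, of "\<lambda>x. w x - \<mu>"] dirichlet_form_diff_const[of E U w \<mu>]
    by (simp add: algebra_simps)
qed

lemma mult_sq_ge_half_level_sq:
  fixes a K \<mu> w :: real
  assumes "0 \<le> a" "a \<le> K"
  shows "a * (\<mu>^2 / 2) - K * (w - \<mu>)^2 \<le> a * w^2"
proof -
  have "\<mu>^2 / 2 \<le> w^2 + (w - \<mu>)^2"
    using zero_le_power2[of "\<mu> - 2 * w"] by (simp add: power2_eq_square algebra_simps)
  hence "a * (\<mu>^2 / 2) \<le> a * (w^2 + (w - \<mu>)^2)" by (rule mult_left_mono) (rule assms(1))
  also have "\<dots> = a * w^2 + a * (w - \<mu>)^2" by (simp add: distrib_left)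
  also have "\<dots> \<le> a * w^2 + K * (w - \<mu>)^2" using assms(2) by (simp add: mult_right_mono)
  finally show ?thesis by simp
qed

text \<open>For any level mu, the edges into Wp, where w vanishes, force a Dirichlet energy
  of order mu^2 unless w deviates from mu in the degree-weighted norm.\<close>
lemma dirichlet_form_ge_boundary_level:
  assumes U: "finite U" and sym: "\<forall>x y. E x y \<longrightarrow> E y x" and Wp: "Wp \<subseteq> U"
    and w0: "\<And>x. x \<in> Wp \<Longrightarrow> w x = 0"
    and s: "s > 0" and degs: "\<forall>x\<in>U. real (deg_into E x U) \<ge> s"
  shows "dirichlet_form E U w
           \<ge> \<mu>^2 / 2 * (real (card Wp) * s) - real (card Wp) / s * deg_sq_norm E U (\<lambda>x. w x - \<mu>)"
proof -
  define m where "m = real (card Wp)"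
  define a where "a = (\<lambda>x. \<Sum>y\<in>Wp. adj E x y)"
  have a0: "a x \<ge> 0" for x unfolding a_def by (intro sum_nonneg adj_nonneg)
  have a_le: "a x \<le> m / s * real (deg_into E x U)" if "x \<in> U" for x
  proof -
    have "a x \<le> (\<Sum>y\<in>Wp. 1)" unfolding a_def by (rule sum_mono) (simp add: adj_le_1)
    also have "\<dots> = m" using m_def by simp
    also have "m \<le> m / s * real (deg_into E x U)"
    proof -
      have "m * s \<le> m * real (deg_into E x U)" using degs that unfolding m_def by (simp add: mult_left_mono)
      thus ?thesis using s by (simp add: field_simps)
    qed
    finally show ?thesis .
  qed
  have "(\<Sum>x\<in>U. a x) = (\<Sum>y\<in>Wp. \<Sum>x\<in>U. adj E y x)"
    unfolding a_def by (subst sum.swap) (simp add: adj_commute[OF sym])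
  also have "\<dots> = (\<Sum>y\<in>Wp. real (deg_into E y U))" by (simp add: deg_into_eq_sum_adj[OF U])
  also have "\<dots> \<ge> (\<Sum>y\<in>Wp. s)" by (rule sum_mono) (use degs Wp in auto)
  finally have suma: "(\<Sum>x\<in>U. a x) \<ge> m * s" using m_def by simp
  have pointwise: "a x * (\<mu>^2 / 2) - m / s * (real (deg_into E x U) * (w x - \<mu>)^2) \<le> a x * (w x)^2"
    if "x \<in> U" for x
    using mult_sq_ge_half_level_sq[OF a0 a_le[OF that], of \<mu> "w x"] by (simp add: mult.assoc)
  have "dirichlet_form E U w \<ge> (\<Sum>x\<in>U. a x * (w x)^2)"
    using dirichlet_form_ge_boundary[OF U sym Wp w0] a_def by simp
  moreover have "(\<Sum>x\<in>U. a x * (w x)^2)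
      \<ge> (\<Sum>x\<in>U. a x * (\<mu>^2 / 2) - m / s * (real (deg_into E x U) * (w x - \<mu>)^2))"
    by (rule sum_mono) (rule pointwise)
  moreover have "(\<Sum>x\<in>U. a x * (\<mu>^2 / 2) - m / s * (real (deg_into E x U) * (w x - \<mu>)^2))
      = (\<mu>^2 / 2) * (\<Sum>x\<in>U. a x) - m / s * deg_sq_norm E U (\<lambda>x. w x - \<mu>)"
    by (simp add: sum_subtractf sum_distrib_left sum_distrib_right deg_sq_norm_def mult.commute)
  moreover have "(\<mu>^2 / 2) * (\<Sum>x\<in>U. a x) \<ge> \<mu>^2 / 2 * (m * s)"
    using suma by (simp add: mult_left_mono)
  ultimately show ?thesis unfolding m_def by linarith
qed

lemma min_div_3_le_mult_div:
  fixes L \<gamma> :: real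
  assumes "L > 0" "\<gamma> > 0"
  shows "min L \<gamma> / 3 \<le> L * \<gamma> / (2 * L + \<gamma>)"
  using assms by (cases "L \<le> \<gamma>") (auto simp: field_simps min_def mult_right_mono)

text \<open>Poincare inequality for functions vanishing on Wp: the spectral gap controls the
  fluctuation around the weighted mean mu, and the edges into Wp control mu itself.\<close>
lemma dirichlet_form_ge_fluctuation_and_mean:
  fixes w :: "nat \<Rightarrow> real"
  assumes U: "finite U" and sym: "\<forall>x y. E x y \<longrightarrow> E y x"
    and Wp: "Wp \<subseteq> U" "Wp \<noteq> {}" and w0: "\<And>x. x \<in> Wp \<Longrightarrow> w x = 0"
    and s: "s > 0" and degs: "\<forall>x\<in>U. real (deg_into E x U) \<ge> s"
    and gap: "spectral_gap E U \<ge> \<gamma>" and \<gamma>: "\<gamma> > 0"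
  defines "L \<equiv> real (card Wp) / s"
    and "\<mu> \<equiv> (\<Sum>x\<in>U. real (deg_into E x U) * w x) / (\<Sum>x\<in>U. real (deg_into E x U))"
  shows "dirichlet_form E U w
    \<ge> L * \<gamma> / (2 * L + \<gamma>) * (deg_sq_norm E U (\<lambda>x. w x - \<mu>) + \<mu>^2 * s^2 / 2)"
proof -
  define Var where "Var = deg_sq_norm E U (\<lambda>x. w x - \<mu>)"
  define D where "D = dirichlet_form E U w"
  have dpos: "\<forall>x\<in>U. deg_into E x U > 0" using degs s by (metis of_nat_0_less_iff order_less_le_trans)
  have Lp: "L > 0" using Wp U s unfolding L_def by (simp add: card_gt_0_iff finite_subset)
  have D1: "D \<ge> \<gamma> * Var"
    using dirichlet_form_ge_gap_fluctuation[OF U _ dpos sym gap \<gamma>, of w] Wp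
    unfolding D_def Var_def \<mu>_def by auto
  have D2: "D \<ge> \<mu>^2 / 2 * (L * s^2) - L * Var"
    using dirichlet_form_ge_boundary_level[where \<mu> = \<mu>, OF U sym Wp(1) w0 s degs] s
    unfolding D_def Var_def L_def by (simp add: power2_eq_square)
  have "(2 * L + \<gamma>) * D \<ge> 2 * L * (\<gamma> * Var) + \<gamma> * (\<mu>^2 / 2 * (L * s^2) - L * Var)"
    using D1 D2 Lp \<gamma> by (simp add: distrib_right add_mono mult_left_mono)
  hence "(2 * L + \<gamma>) * D \<ge> L * \<gamma> * (Var + \<mu>^2 * s^2 / 2)" by (simp add: algebra_simps)
  thus ?thesis using Lp \<gamma> unfolding D_def Var_def by (simp add: field_simps)
qed

lemma deg_sq_norm_le_fluctuation_and_mean: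
  fixes w :: "nat \<Rightarrow> real"
  assumes U: "finite U" "U \<noteq> {}" and s: "s > 0" and degs: "\<forall>x\<in>U. real (deg_into E x U) \<ge> s"
    and nn: "real (card U) \<le> nn"
  defines "\<mu> \<equiv> (\<Sum>x\<in>U. real (deg_into E x U) * w x) / (\<Sum>x\<in>U. real (deg_into E x U))"
  shows "s^2 / (2 * nn^2) * deg_sq_norm E U w \<le> deg_sq_norm E U (\<lambda>x. w x - \<mu>) + \<mu>^2 * s^2 / 2"
proof -
  define d where "d = (\<lambda>x. real (deg_into E x U))"
  define T where "T = (\<Sum>x\<in>U. d x)"
  define c where "c = s^2 / (2 * nn^2)"
  have d_le: "d x \<le> nn" for x
    unfolding d_def by (meson deg_into_le_card[OF U(1)] nn of_nat_le_iff order_trans)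
  obtain x where "x \<in> U" using U by blast
  hence snn: "s \<le> nn" using degs d_le[of x] unfolding d_def by force
  have Tpos: "T > 0" unfolding T_def d_def using U degs s by (intro sum_pos) force+
  have "T \<le> (\<Sum>x\<in>U. nn)" unfolding T_def by (rule sum_mono) (rule d_le)
  also have "\<dots> \<le> nn * nn" using nn snn s by (simp add: mult_right_mono)
  finally have Tle: "T \<le> nn^2" by (simp add: power2_eq_square)
  have nnp: "nn > 0" using snn s by linarith
  have "s^2 \<le> 2 * nn^2" using power_mono[OF snn less_imp_le[OF s], of 2] zero_le_power2[of nn] by linarith
  hence c: "0 \<le> c" "c \<le> 1" "c * T \<le> s^2 / 2"
    using Tle nnp unfolding c_def by (simp_all add: field_simps mult_right_mono)
  have "c * deg_sq_norm E U w = c * deg_sq_norm E U (\<lambda>x. w x - \<mu>) + \<mu>^2 * (c * T)"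
    using weighted_sq_sum_decompose(2)[of d U w] Tpos
    unfolding deg_sq_norm_def \<mu>_def T_def d_def by (simp add: algebra_simps)
  also have "\<dots> \<le> deg_sq_norm E U (\<lambda>x. w x - \<mu>) + \<mu>^2 * (s^2 / 2)"
    using c deg_sq_norm_nonneg by (intro add_mono mult_left_le_one_le mult_left_mono) auto
  finally show ?thesis unfolding c_def by simp
qed

lemma dirichlet_form_ge_part:
  assumes U: "finite U" and sym: "\<forall>x y. E x y \<longrightarrow> E y x"
    and Wp: "Wp \<subseteq> U" "Wp \<noteq> {}" and w0: "\<And>x. x \<in> Wp \<Longrightarrow> w x = 0"
    and s: "s > 0" and degs: "\<forall>x\<in>U. real (deg_into E x U) \<ge> s"
    and nn: "real (card U) \<le> nn"
    and gap: "spectral_gap E U \<ge> \<gamma>" and \<gamma>: "\<gamma> > 0"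
  shows "dirichlet_form E U w \<ge> min (real (card Wp) / s) \<gamma> / 3 * (s^2 / (2 * nn^2)) * deg_sq_norm E U w"
proof -
  define L where "L = real (card Wp) / s"
  define \<mu> where "\<mu> = (\<Sum>x\<in>U. real (deg_into E x U) * w x) / (\<Sum>x\<in>U. real (deg_into E x U))"
  define X where "X = deg_sq_norm E U (\<lambda>x. w x - \<mu>) + \<mu>^2 * s^2 / 2"
  have Lp: "L > 0" using Wp U s unfolding L_def by (simp add: card_gt_0_iff finite_subset)
  have "s^2 / (2 * nn^2) * deg_sq_norm E U w \<le> X"
    using deg_sq_norm_le_fluctuation_and_mean[OF U _ s degs nn, of w] Wp unfolding X_def \<mu>_def by auto
  hence "min L \<gamma> / 3 * (s^2 / (2 * nn^2) * deg_sq_norm E U w) \<le> min L \<gamma> / 3 * X"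
    by (rule mult_left_mono) (use Lp \<gamma> in simp)
  hence "min L \<gamma> / 3 * (s^2 / (2 * nn^2)) * deg_sq_norm E U w \<le> min L \<gamma> / 3 * X"
    by (simp only: mult.assoc)
  also have "\<dots> \<le> L * \<gamma> / (2 * L + \<gamma>) * X"
    using min_div_3_le_mult_div[OF Lp \<gamma>] deg_sq_norm_nonneg unfolding X_def
    by (intro mult_right_mono) auto
  also have "\<dots> \<le> dirichlet_form E U w"
    using dirichlet_form_ge_fluctuation_and_mean[OF U sym Wp w0 s degs gap \<gamma>]
    unfolding X_def L_def \<mu>_def .
  finally show ?thesis unfolding L_def .
qed

lemma dirichlet_form_ge_of_parts:
  fixes k :: nat
  assumes V: "finite V"
    and parts: "(\<Union>i<k. Vs i) = V" and disj: "\<forall>i<k. \<forall>j<k. i \<noteq> j \<longrightarrow> Vs i \<inter> Vs j = {}"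
    and per: "\<forall>i<k. dirichlet_form E (Vs i) w \<ge> c * deg_sq_norm E (Vs i) w"
    and ratio: "\<forall>i<k. \<forall>x\<in>Vs i. real (deg_into E x (Vs i)) \<ge> q * real (deg_into E x V)"
    and c: "c \<ge> 0" and q: "q \<ge> 0"
  shows "dirichlet_form E V w \<ge> c * q * deg_sq_norm E V w"
proof -
  let ?t = "\<lambda>p. adj E (fst p) (snd p) * (w (fst p) - w (snd p))^2"
  have fin: "\<And>i. i < k \<Longrightarrow> finite (Vs i)"
    using parts V by (metis UN_I finite_subset lessThan_iff subsetI)
  have dir_pairs: "dirichlet_form E U w = (\<Sum>p\<in>U \<times> U. ?t p) / 2" for U
    unfolding dirichlet_form_def sum.cartesian_product by (simp add: case_prod_unfold)
  \<comment> \<open>the parts' Dirichlet forms only count the edges inside the parts\<close>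
  have "(\<Sum>i<k. \<Sum>p\<in>Vs i \<times> Vs i. ?t p) = (\<Sum>p\<in>(\<Union>i<k. Vs i \<times> Vs i). ?t p)"
    by (rule sum.UNION_disjoint[symmetric]) (use fin disj in auto)
  also have "\<dots> \<le> (\<Sum>p\<in>V \<times> V. ?t p)"
    by (rule sum_mono2) (use V parts in \<open>auto intro!: mult_nonneg_nonneg adj_nonneg\<close>)
  finally have inside: "(\<Sum>i<k. dirichlet_form E (Vs i) w) \<le> dirichlet_form E V w"
    by (simp add: dir_pairs sum_divide_distrib[symmetric] divide_right_mono)
  have "c * q * deg_sq_norm E V w = (\<Sum>i<k. c * (\<Sum>x\<in>Vs i. q * real (deg_into E x V) * (w x)^2))"
  proof -
    have "deg_sq_norm E V w = (\<Sum>i<k. \<Sum>x\<in>Vs i. real (deg_into E x V) * (w x)^2)"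
      unfolding deg_sq_norm_def parts[symmetric]
      by (rule sum.UNION_disjoint) (use fin disj in auto)
    thus ?thesis by (simp add: sum_distrib_left mult.assoc)
  qed
  also have "\<dots> \<le> (\<Sum>i<k. c * deg_sq_norm E (Vs i) w)"
    unfolding deg_sq_norm_def
    by (intro sum_mono mult_left_mono c mult_right_mono) (use ratio in auto)
  also have "\<dots> \<le> (\<Sum>i<k. dirichlet_form E (Vs i) w)" by (rule sum_mono) (use per in auto)
  finally show ?thesis using inside by linarith
qed

section \<open>Weighted geometric series\<close>

lemma weighted_series_le_geometric:
  fixes a :: "nat \<Rightarrow> real"
  assumes r: "0 < r" "r < 1" and B: "B \<ge> 0"
    and a: "\<And>t. 0 \<le> a t" "\<And>t. a t \<le> B * r ^ t"
  shows "summable (\<lambda>t. real (t + 2) * a t)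
    \<and> (\<Sum>t. real (t + 2) * a t) \<le> B * (1 / (1 - r)^2 + 1 / (1 - r))"
proof -
  define g where "g = (\<lambda>t. B * (of_nat (Suc t) * r ^ t + r ^ t))"
  have "(\<lambda>t. of_nat (Suc t) * r ^ t) sums (1 / (1 - r)^2)"
    using geometric_deriv_sums[of r] r by simp
  moreover have "(\<lambda>t. r ^ t) sums (1 / (1 - r))" using geometric_sums[of r] r by simp
  ultimately have g: "g sums (B * (1 / (1 - r)^2 + 1 / (1 - r)))"
    unfolding g_def by (intro sums_mult sums_add)
  have le: "norm (real (t + 2) * a t) \<le> g t" for t
  proof -
    have "norm (real (t + 2) * a t) = real (t + 2) * a t" using a(1)[of t] by simp
    also have "\<dots> \<le> real (t + 2) * (B * r ^ t)" using a(2)[of t] by (intro mult_left_mono) auto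
    also have "\<dots> = g t" unfolding g_def by (simp add: algebra_simps)
    finally show ?thesis .
  qed
  have sm: "summable (\<lambda>t. real (t + 2) * a t)"
    by (rule summable_comparison_test[OF _ sums_summable[OF g]]) (use le in auto)
  have "(\<Sum>t. real (t + 2) * a t) \<le> (\<Sum>t. g t)"
    by (rule suminf_le) (use le sm sums_summable[OF g] in \<open>auto intro: order_trans[OF abs_ge_self]\<close>)
  also have "\<dots> = B * (1 / (1 - r)^2 + 1 / (1 - r))" using g sums_unique by metis
  finally show ?thesis using sm by simp
qed

lemma sqrt_one_minus_bounds:
  fixes \<eta> :: real
  assumes \<eta>: "0 < \<eta>" "\<eta> \<le> 1/2"
  shows "1/2 \<le> sqrt (1 - \<eta>)" and "\<eta> / 2 \<le> 1 - sqrt (1 - \<eta>)"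
proof -
  have "sqrt (1/4) \<le> sqrt (1 - \<eta>)" using \<eta> by (intro real_sqrt_le_mono) auto
  moreover have "sqrt (1/4 :: real) = 1/2" by (simp add: real_sqrt_divide)
  ultimately show "1/2 \<le> sqrt (1 - \<eta>)" by simp
  have "(1 - \<eta>/2)^2 = 1 - \<eta> + \<eta>^2/4" by (simp add: power2_eq_square field_simps)
  hence "1 - \<eta> \<le> (1 - \<eta>/2)^2" using zero_le_power2[of \<eta>] by linarith
  hence "sqrt (1 - \<eta>) \<le> sqrt ((1 - \<eta>/2)^2)" by (rule real_sqrt_le_mono)
  hence "sqrt (1 - \<eta>) \<le> 1 - \<eta>/2" using \<eta> by simp
  thus "\<eta> / 2 \<le> 1 - sqrt (1 - \<eta>)" by simp
qed

lemma geometric_sqrt_constant_le: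
  fixes \<eta> D :: real
  assumes \<eta>: "0 < \<eta>" "\<eta> \<le> 1/2" and D: "D > 0"
  shows "1 / (sqrt (1 - \<eta>) * D) * (1 / (1 - sqrt (1 - \<eta>))^2 + 1 / (1 - sqrt (1 - \<eta>)))
    \<le> 16 / (D * \<eta>^2)"
proof -
  define r where "r = sqrt (1 - \<eta>)"
  have r: "1/2 \<le> r" "\<eta>/2 \<le> 1 - r" using sqrt_one_minus_bounds[OF \<eta>] unfolding r_def by auto
  have "1 / (1 - r) \<le> 1 / (\<eta>/2)" using r \<eta> by (intro divide_left_mono) auto
  hence i1: "1 / (1 - r) \<le> 2 / \<eta>" by simp
  have "(\<eta>/2)^2 \<le> (1 - r)^2" using r \<eta> by (intro power_mono) auto
  hence "1 / (1 - r)^2 \<le> 1 / (\<eta>/2)^2" using r \<eta> by (intro divide_left_mono) auto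
  hence i2: "1 / (1 - r)^2 \<le> 4 / \<eta>^2" by (simp add: power_divide)
  have "2 / \<eta> = (2 * \<eta>) / \<eta>^2" using \<eta> by (simp add: power2_eq_square)
  also have "\<dots> \<le> 4 / \<eta>^2" using \<eta> by (intro divide_right_mono) auto
  finally have i3: "2 / \<eta> \<le> 4 / \<eta>^2" .
  have "1 / (r * D) \<le> 1 / ((1/2) * D)" using r D by (intro divide_left_mono) auto
  hence "1 / (r * D) \<le> 2 / D" by simp
  hence "1 / (r * D) * (1 / (1 - r)^2 + 1 / (1 - r)) \<le> (2 / D) * (8 / \<eta>^2)"
    using i1 i2 i3 r D \<eta> by (intro mult_mono) auto
  thus ?thesis unfolding r_def by simp
qed

section \<open>Decay of the killed walk\<close>

lemma adj_form_commute: "\<forall>x y. E x y \<longrightarrow> E y x \<Longrightarrow> adj_form E U f g = adj_form E U g f"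
  unfolding adj_form_def by (subst sum.swap) (simp add: adj_commute mult.commute mult.left_commute)

lemma adj_form_polarize:
  assumes "\<forall>x y. E x y \<longrightarrow> E y x"
  shows "adj_form E U (\<lambda>x. f x + g x) (\<lambda>x. f x + g x) - adj_form E U (\<lambda>x. f x - g x) (\<lambda>x. f x - g x)
       = 4 * adj_form E U f g"
proof -
  have "adj_form E U (\<lambda>x. f x + g x) (\<lambda>x. f x + g x) - adj_form E U (\<lambda>x. f x - g x) (\<lambda>x. f x - g x)
      = (\<Sum>x\<in>U. \<Sum>y\<in>U. 2 * (adj E x y * f x * g y) + 2 * (adj E x y * g x * f y))"
    unfolding adj_form_def by (simp add: sum_subtractf[symmetric] algebra_simps)
  also have "\<dots> = 2 * adj_form E U f g + 2 * adj_form E U g f"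
    unfolding adj_form_def by (simp add: sum.distrib sum_distrib_left)
  finally show ?thesis using adj_form_commute[OF assms, of U g f] by simp
qed

lemma deg_sq_norm_parallelogram:
  "deg_sq_norm E U (\<lambda>x. f x + g x) + deg_sq_norm E U (\<lambda>x. f x - g x)
     = 2 * deg_sq_norm E U f + 2 * deg_sq_norm E U g"
  unfolding deg_sq_norm_def
  by (simp add: sum.distrib[symmetric] sum_distrib_left algebra_simps power2_eq_square)

lemma neg_adj_form_le_adj_form_abs:
  "- adj_form E U w w \<le> adj_form E U (\<lambda>x. \<bar>w x\<bar>) (\<lambda>x. \<bar>w x\<bar>)"
proof -
  have "- (adj E x y * w x * w y) \<le> adj E x y * \<bar>w x\<bar> * \<bar>w y\<bar>" for x y
  proof -
    have "- (w x * w y) \<le> \<bar>w x\<bar> * \<bar>w y\<bar>" by (simp add: abs_mult[symmetric] abs_le_iff)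
    thus ?thesis using adj_nonneg[of E x y] by (metis minus_mult_right mult.assoc mult_left_mono)
  qed
  thus ?thesis unfolding adj_form_def by (simp add: sum_negf[symmetric] sum_mono)
qed

text \<open>Polarization bounds the cross term adj_form g f; the lower bound on adj_form needed for
  it comes from applying the hypothesis to absolute values.\<close>
lemma deg_sq_norm_contraction:
  assumes sym: "\<forall>x y. E x y \<longrightarrow> E y x" and \<eta>: "\<eta> \<ge> 0"
    and R: "\<And>w. \<forall>x\<in>W. w x = 0 \<Longrightarrow> adj_form E U w w \<le> (1 - \<eta>) * deg_sq_norm E U w"
    and fg: "\<forall>x\<in>W. f x = 0" "\<forall>x\<in>W. g x = 0"
    and step: "deg_sq_norm E U g = adj_form E U g f"
  shows "deg_sq_norm E U g \<le> (1 - \<eta>) * deg_sq_norm E U f"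
proof -
  have plus: "adj_form E U (\<lambda>x. g x + f x) (\<lambda>x. g x + f x) \<le> (1 - \<eta>) * deg_sq_norm E U (\<lambda>x. g x + f x)"
    by (rule R) (use fg in auto)
  have "- adj_form E U (\<lambda>x. g x - f x) (\<lambda>x. g x - f x)
      \<le> adj_form E U (\<lambda>x. \<bar>g x - f x\<bar>) (\<lambda>x. \<bar>g x - f x\<bar>)"
    by (rule neg_adj_form_le_adj_form_abs)
  also have "\<dots> \<le> (1 - \<eta>) * deg_sq_norm E U (\<lambda>x. \<bar>g x - f x\<bar>)" by (rule R) (use fg in auto)
  finally have minus: "- adj_form E U (\<lambda>x. g x - f x) (\<lambda>x. g x - f x)
      \<le> (1 - \<eta>) * deg_sq_norm E U (\<lambda>x. g x - f x)"
    by (simp add: deg_sq_norm_def)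
  have "4 * deg_sq_norm E U g
      \<le> (1 - \<eta>) * (deg_sq_norm E U (\<lambda>x. g x + f x) + deg_sq_norm E U (\<lambda>x. g x - f x))"
    using plus minus adj_form_polarize[OF sym, of U g f] step by (simp add: algebra_simps)
  also have "\<dots> = (1 - \<eta>) * (2 * deg_sq_norm E U g + 2 * deg_sq_norm E U f)"
    by (simp add: deg_sq_norm_parallelogram)
  finally show ?thesis
    using \<eta> mult_nonneg_nonneg[OF \<eta> deg_sq_norm_nonneg[of E U g]] by (simp add: algebra_simps)
qed

text \<open>The density of the killed walk with respect to the degrees, its reversible measure: on
  densities the walk acts through the symmetric kernel adj.\<close>
definition killed_density :: "nat set \<Rightarrow> (nat \<Rightarrow> nat \<Rightarrow> bool) \<Rightarrow> nat set \<Rightarrow> nat \<Rightarrow> nat \<Rightarrow> nat \<Rightarrow> real" where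
  "killed_density V E W v t x = killed_walk V E W v t x / real (deg_into E x V)"

lemma killed_walk_nonneg: "killed_walk V E W v t x \<ge> 0"
proof (induction t arbitrary: x)
  case (Suc t)
  have "\<And>u. srw_trans E V u x \<ge> 0" unfolding srw_trans_def by auto
  thus ?case using Suc by (auto intro!: sum_nonneg mult_nonneg_nonneg)
qed simp

lemma killed_walk_in_W: "x \<in> W \<Longrightarrow> killed_walk V E W v t x = 0"
  by (cases t) auto

lemma killed_density_in_W: "x \<in> W \<Longrightarrow> killed_density V E W v t x = 0"
  by (simp add: killed_density_def killed_walk_in_W)

lemma killed_walk_Suc_eq_adj:
  assumes sym: "\<forall>x y. E x y \<longrightarrow> E y x" and x: "x \<in> V" "x \<notin> W"
  shows "killed_walk V E W v (Suc t) x = (\<Sum>u\<in>V. adj E x u * killed_density V E W v t u)"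
  using x sym by (auto intro!: sum.cong simp: srw_trans_def adj_def killed_density_def)

context
  fixes V :: "nat set" and E :: "nat \<Rightarrow> nat \<Rightarrow> bool" and W :: "nat set" and \<delta> :: real and v :: nat
  assumes G: "simple_graph V E"
    and mindeg: "\<forall>x\<in>V. real (deg_into E x V) \<ge> \<delta> * real (card V)"
    and \<delta>: "\<delta> > 0" and v: "v \<in> V"
begin

lemma simple_graph_facts:
  shows finite_V: "finite V" and sym: "\<forall>x y. E x y \<longrightarrow> E y x" and loopless: "\<And>x. \<not> E x x"
    and card_V_pos: "real (card V) > 0"
    and deg_pos: "\<And>x. x \<in> V \<Longrightarrow> real (deg_into E x V) > 0"
    and deg_le_card: "\<And>x. real (deg_into E x V) \<le> real (card V)"
proof -
  show fin: "finite V" and "\<forall>x y. E x y \<longrightarrow> E y x" and "\<And>x. \<not> E x x"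
    using G unfolding simple_graph_def by auto
  show n: "real (card V) > 0" using fin v card_gt_0_iff by fastforce
  show "real (deg_into E x V) > 0" if "x \<in> V" for x
    using mindeg that n \<delta> by (meson mult_pos_pos order_less_le_trans)
  show "real (deg_into E x V) \<le> real (card V)" for x using deg_into_le_card[OF fin] by simp
qed

lemma killed_density_norm_step:
  "deg_sq_norm E V (killed_density V E W v (Suc t))
     = adj_form E V (killed_density V E W v (Suc t)) (killed_density V E W v t)"
proof -
  let ?h = "killed_density V E W v"
  have "real (deg_into E x V) * (?h (Suc t) x)^2 = ?h (Suc t) x * (\<Sum>y\<in>V. adj E x y * ?h t y)"
    if x: "x \<in> V" for x
  proof (cases "x \<in> W")
    case False
    thus ?thesis using killed_walk_Suc_eq_adj[OF sym x False, of v t] deg_pos[OF x]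
      by (simp add: killed_density_def power2_eq_square)
  qed (simp add: killed_density_in_W)
  thus ?thesis unfolding deg_sq_norm_def adj_form_def
    by (simp add: sum_distrib_left mult.assoc mult.left_commute cong: sum.cong)
qed

lemma killed_density_norm_decay:
  assumes \<eta>: "0 \<le> \<eta>" "\<eta> \<le> 1"
    and dir: "\<And>w. \<forall>x\<in>W. w x = 0 \<Longrightarrow> dirichlet_form E V w \<ge> \<eta> * deg_sq_norm E V w"
  shows "deg_sq_norm E V (killed_density V E W v (Suc t))
           \<le> (1 - \<eta>)^t * deg_sq_norm E V (killed_density V E W v 1)"
proof (induction t)
  case (Suc t)
  have R: "adj_form E V w w \<le> (1 - \<eta>) * deg_sq_norm E V w" if "\<forall>x\<in>W. w x = 0" for w
    using dir[OF that] dirichlet_form_eq[OF finite_V sym, of w] by (simp add: algebra_simps)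
  have "deg_sq_norm E V (killed_density V E W v (Suc (Suc t)))
      \<le> (1 - \<eta>) * deg_sq_norm E V (killed_density V E W v (Suc t))"
    by (rule deg_sq_norm_contraction[OF sym \<eta>(1) R _ _ killed_density_norm_step])
      (auto simp: killed_density_in_W)
  also have "\<dots> \<le> (1 - \<eta>) * ((1 - \<eta>)^t * deg_sq_norm E V (killed_density V E W v 1))"
    using Suc \<eta>(2) by (intro mult_left_mono) auto
  finally show ?case by simp
qed simp

lemma killed_walk_1_le:
  assumes x: "x \<in> V"
  shows "killed_walk V E W v 1 x \<le> adj E x v / real (deg_into E v V)"
proof (cases "x \<in> W")
  case False
  have "killed_walk V E W v 1 x = (\<Sum>u\<in>V. adj E x u * killed_density V E W v 0 u)"
    using killed_walk_Suc_eq_adj[OF sym x False] by simp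
  also have "\<dots> \<le> (\<Sum>u\<in>V. adj E x u * (if u = v then 1 / real (deg_into E v V) else 0))"
    by (intro sum_mono mult_left_mono adj_nonneg) (auto simp: killed_density_def)
  also have "\<dots> = adj E x v / real (deg_into E v V)"
    using v finite_V by (simp add: if_distrib[of "(*) _"] cong: if_cong)
  finally show ?thesis .
next
  case True
  hence "killed_walk V E W v 1 x = 0" by (rule killed_walk_in_W)
  moreover have "adj E x v / real (deg_into E v V) \<ge> 0" by (simp add: adj_nonneg)
  ultimately show ?thesis by linarith
qed

lemma killed_density_norm_1:
  "deg_sq_norm E V (killed_density V E W v 1) \<le> 1 / (\<delta> * real (card V))^2"
proof -
  define n where "n = real (card V)"
  define d where "d = (\<lambda>x. real (deg_into E x V))"
  have dv: "\<delta> * n \<le> d v" "d v > 0" using mindeg v deg_pos[OF v] unfolding n_def d_def by auto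
  have "deg_sq_norm E V (killed_density V E W v 1) = (\<Sum>x\<in>V. (killed_walk V E W v 1 x)^2 / d x)"
    unfolding deg_sq_norm_def killed_density_def d_def
    by (rule sum.cong) (use deg_pos in \<open>auto simp: power2_eq_square\<close>)
  also have "\<dots> \<le> (\<Sum>x\<in>V. adj E x v / (d v)^2 / (\<delta> * n))"
  proof (rule sum_mono)
    fix x assume x: "x \<in> V"
    have "(killed_walk V E W v 1 x)^2 \<le> (adj E x v / d v)^2"
      unfolding d_def by (rule power_mono[OF killed_walk_1_le[OF x] killed_walk_nonneg])
    also have "\<dots> = adj E x v / (d v)^2" by (simp add: adj_def power_divide)
    finally have "(killed_walk V E W v 1 x)^2 \<le> adj E x v / (d v)^2" .
    have dx: "\<delta> * n \<le> d x" "\<delta> * n > 0"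
      using mindeg x \<delta> card_V_pos unfolding n_def d_def by auto
    have "(killed_walk V E W v 1 x)^2 / d x \<le> (killed_walk V E W v 1 x)^2 / (\<delta> * n)"
      using dx by (intro divide_left_mono) auto
    also have "\<dots> \<le> adj E x v / (d v)^2 / (\<delta> * n)"
      using \<open>(killed_walk V E W v 1 x)^2 \<le> adj E x v / (d v)^2\<close> dx by (intro divide_right_mono) auto
    finally show "(killed_walk V E W v 1 x)^2 / d x \<le> adj E x v / (d v)^2 / (\<delta> * n)" .
  qed
  also have "\<dots> = d v / (d v)^2 / (\<delta> * n)"
    by (simp add: sum_divide_distrib[symmetric] d_def deg_into_eq_sum_adj[OF finite_V]
        adj_commute[OF sym])
  also have "\<dots> = 1 / (d v * (\<delta> * n))" using dv by (simp add: power2_eq_square)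
  also have "\<dots> \<le> 1 / ((\<delta> * n) * (\<delta> * n))"
    using dv \<delta> card_V_pos unfolding n_def by (intro divide_left_mono mult_right_mono mult_pos_pos) auto
  finally show ?thesis unfolding n_def by (simp add: power2_eq_square)
qed

lemma sum_adj_div_deg_le: "(\<Sum>u\<in>V. adj E v u / real (deg_into E u V)) \<le> 1 / \<delta>"
proof -
  have "(\<Sum>u\<in>V. adj E v u / real (deg_into E u V)) \<le> (\<Sum>u\<in>V. adj E v u / (\<delta> * real (card V)))"
    by (rule sum_mono) (use mindeg deg_pos \<delta> card_V_pos adj_nonneg in \<open>auto intro!: divide_left_mono\<close>)
  also have "\<dots> = real (deg_into E v V) / (\<delta> * real (card V))"
    by (simp add: sum_divide_distrib[symmetric] deg_into_eq_sum_adj[OF finite_V])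
  also have "\<dots> \<le> real (card V) / (\<delta> * real (card V))"
    using deg_le_card \<delta> card_V_pos by (intro divide_right_mono) auto
  finally show ?thesis using card_V_pos by simp
qed

lemma killed_walk_return_sq_le:
  "(killed_walk V E W v (Suc t) v)^2 \<le> deg_sq_norm E V (killed_density V E W v t) / \<delta>"
proof (cases "v \<in> W")
  case False
  define d where "d = (\<lambda>x. real (deg_into E x V))"
  define h where "h = killed_density V E W v t"
  have dpos: "\<And>u. u \<in> V \<Longrightarrow> d u > 0" using deg_pos d_def by simp
  have "killed_walk V E W v (Suc t) v = (\<Sum>u\<in>V. adj E v u * h u)"
    unfolding h_def by (rule killed_walk_Suc_eq_adj[OF sym v False])
  also have "\<dots> = (\<Sum>u\<in>V. (sqrt (d u) * h u) * (adj E v u / sqrt (d u)))"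
  proof (rule sum.cong[OF refl])
    fix u assume "u \<in> V"
    hence "sqrt (d u) > 0" using dpos by simp
    thus "adj E v u * h u = (sqrt (d u) * h u) * (adj E v u / sqrt (d u))" by (simp add: field_simps)
  qed
  finally have "(killed_walk V E W v (Suc t) v)^2
      \<le> (\<Sum>u\<in>V. (sqrt (d u) * h u)^2) * (\<Sum>u\<in>V. (adj E v u / sqrt (d u))^2)"
    using Cauchy_Schwarz_ineq_sum by metis
  also have "(\<Sum>u\<in>V. (sqrt (d u) * h u)^2) = deg_sq_norm E V h"
    unfolding deg_sq_norm_def d_def by (rule sum.cong) (use dpos in \<open>auto simp: power_mult_distrib d_def\<close>)
  also have "(\<Sum>u\<in>V. (adj E v u / sqrt (d u))^2) \<le> 1 / \<delta>"
  proof -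
    have "(\<Sum>u\<in>V. (adj E v u / sqrt (d u))^2) = (\<Sum>u\<in>V. adj E v u / d u)"
      by (rule sum.cong) (use dpos in \<open>auto simp: power_divide adj_def less_imp_le\<close>)
    thus ?thesis using sum_adj_div_deg_le unfolding d_def by simp
  qed
  hence "deg_sq_norm E V h * (\<Sum>u\<in>V. (adj E v u / sqrt (d u))^2) \<le> deg_sq_norm E V h * (1 / \<delta>)"
    by (intro mult_left_mono deg_sq_norm_nonneg)
  finally show ?thesis by (simp only: h_def times_divide_eq_right mult_1_right)
next
  case True
  have "killed_walk V E W v (Suc t) v = 0" using True by (rule killed_walk_in_W)
  moreover have "deg_sq_norm E V (killed_density V E W v t) / \<delta> \<ge> 0"
    using \<delta> by (intro divide_nonneg_nonneg deg_sq_norm_nonneg) auto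
  ultimately show ?thesis by simp
qed

lemma killed_walk_return_le:
  assumes \<eta>: "0 < \<eta>" "\<eta> < 1"
    and dir: "\<And>w. \<forall>x\<in>W. w x = 0 \<Longrightarrow> dirichlet_form E V w \<ge> \<eta> * deg_sq_norm E V w"
  shows "pW V E W (Suc t) v \<le> sqrt (1 - \<eta>) ^ t / (sqrt (1 - \<eta>) * \<delta> * sqrt \<delta> * real (card V))"
proof (cases t)
  case 0
  have "killed_walk V E W v 1 v \<le> 0" using killed_walk_1_le[OF v] loopless by (simp add: adj_def)
  moreover have "0 \<le> 1 / (sqrt (1 - \<eta>) * \<delta> * sqrt \<delta> * real (card V))"
    using \<eta> \<delta> by (intro divide_nonneg_nonneg) auto
  ultimately show ?thesis unfolding pW_def 0 power_0 One_nat_def[symmetric] by linarith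
next
  case (Suc t')
  define r where "r = sqrt (1 - \<eta>)"
  define n where "n = real (card V)"
  have r: "r > 0" "r^2 = 1 - \<eta>" using \<eta> r_def by auto
  have n: "n > 0" using card_V_pos n_def by simp
  have "(killed_walk V E W v (Suc t) v)^2 \<le> deg_sq_norm E V (killed_density V E W v t) / \<delta>"
    by (rule killed_walk_return_sq_le)
  also have "\<dots> \<le> (1 - \<eta>)^t' * (1 / (\<delta> * n)^2) / \<delta>"
  proof (intro divide_right_mono)
    have "deg_sq_norm E V (killed_density V E W v (Suc t'))
        \<le> (1 - \<eta>)^t' * deg_sq_norm E V (killed_density V E W v 1)"
      by (rule killed_density_norm_decay) (use \<eta> dir in auto)
    also have "\<dots> \<le> (1 - \<eta>)^t' * (1 / (\<delta> * n)^2)"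
      using killed_density_norm_1 \<eta> unfolding n_def by (intro mult_left_mono) auto
    finally show "deg_sq_norm E V (killed_density V E W v t) \<le> (1 - \<eta>)^t' * (1 / (\<delta> * n)^2)"
      using Suc by simp
  qed (use \<delta> in simp)
  also have "\<dots> = (r ^ t' / (\<delta> * sqrt \<delta> * n))^2"
  proof -
    have "(r ^ t')^2 = (1 - \<eta>)^t'" by (simp add: power_even_eq[symmetric] power_mult r(2))
    moreover have "(sqrt \<delta>)^2 = \<delta>" using \<delta> by simp
    ultimately show ?thesis by (simp add: power_divide power_mult_distrib power2_eq_square)
  qed
  also have "r ^ t' / (\<delta> * sqrt \<delta> * n) = r ^ t / (r * \<delta> * sqrt \<delta> * n)"
    using r Suc by simp
  finally show ?thesis unfolding pW_def r_def[symmetric] n_def[symmetric]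
    by (rule power2_le_imp_le) (use r \<delta> n in simp)
qed

end

lemma max_killed_walk_return_le:
  assumes G: "simple_graph V E"
    and mindeg: "\<forall>x\<in>V. real (deg_into E x V) \<ge> \<delta> * real (card V)"
    and \<delta>: "\<delta> > 0" and \<eta>: "0 < \<eta>" "\<eta> < 1"
    and dir: "\<And>w. \<forall>x\<in>W. w x = 0 \<Longrightarrow> dirichlet_form E V w \<ge> \<eta> * deg_sq_norm E V w"
  shows "0 \<le> Max ((\<lambda>v. pW V E W (t + 1) v) ` V)"
    and "Max ((\<lambda>v. pW V E W (t + 1) v) ` V)
           \<le> 1 / (sqrt (1 - \<eta>) * (\<delta> * sqrt \<delta> * real (card V))) * sqrt (1 - \<eta>) ^ t"
proof -
  have V: "finite V" "V \<noteq> {}" using G unfolding simple_graph_def by auto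
  then obtain v where v: "v \<in> V" by blast
  have "0 \<le> pW V E W (t + 1) v" unfolding pW_def by (rule killed_walk_nonneg)
  also have "\<dots> \<le> Max ((\<lambda>v. pW V E W (t + 1) v) ` V)" using V v by (intro Max_ge) auto
  finally show "0 \<le> Max ((\<lambda>v. pW V E W (t + 1) v) ` V)" .
  have "pW V E W (t + 1) v
      \<le> 1 / (sqrt (1 - \<eta>) * (\<delta> * sqrt \<delta> * real (card V))) * sqrt (1 - \<eta>) ^ t" if "v \<in> V" for v
    using killed_walk_return_le[OF G mindeg \<delta> that \<eta> dir, where t = t] by (simp add: mult.assoc)
  thus "Max ((\<lambda>v. pW V E W (t + 1) v) ` V)
      \<le> 1 / (sqrt (1 - \<eta>) * (\<delta> * sqrt \<delta> * real (card V))) * sqrt (1 - \<eta>) ^ t"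
    using V by (subst Max_le_iff) auto
qed

text \<open>With eta of order c / sqrt n the return series is of order n / c^2, and the prefactor
  1 / (delta^(3/2) n) of the return probabilities cancels the n.\<close>
lemma killed_walk_return_series_le:
  assumes G: "simple_graph V E"
    and mindeg: "\<forall>x\<in>V. real (deg_into E x V) \<ge> \<delta> * real (card V)"
    and \<delta>: "\<delta> > 0" and c: "c > 0"
    and dir: "\<And>w. \<forall>x\<in>W. w x = 0
                \<Longrightarrow> dirichlet_form E V w \<ge> c / sqrt (real (card V)) * deg_sq_norm E V w"
  shows "summable (\<lambda>t. real (t + 2) * Max ((\<lambda>v. pW V E W (t + 1) v) ` V))
    \<and> (\<Sum>t. real (t + 2) * Max ((\<lambda>v. pW V E W (t + 1) v) ` V))
        \<le> 16 / (\<delta> * sqrt \<delta> * (min c (1/2))^2)"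
proof -
  define n where "n = real (card V)"
  have n: "n \<ge> 1" using G unfolding n_def simple_graph_def by (simp add: Suc_leI card_gt_0_iff)
  define \<eta> where "\<eta> = min c (1/2) / sqrt n"
  have "min c (1/2) / sqrt n \<le> min c (1/2) / 1" using c n by (intro divide_left_mono) auto
  hence \<eta>: "0 < \<eta>" "\<eta> \<le> 1/2" using c n unfolding \<eta>_def by auto
  have dir_\<eta>: "dirichlet_form E V w \<ge> \<eta> * deg_sq_norm E V w" if "\<forall>x\<in>W. w x = 0" for w
  proof -
    have "\<eta> \<le> c / sqrt n" unfolding \<eta>_def using n by (intro divide_right_mono) auto
    hence "\<eta> * deg_sq_norm E V w \<le> c / sqrt n * deg_sq_norm E V w"
      by (intro mult_right_mono deg_sq_norm_nonneg)
    thus ?thesis using dir[OF that] unfolding n_def by linarith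
  qed
  define r where "r = sqrt (1 - \<eta>)"
  define D where "D = \<delta> * sqrt \<delta> * n"
  have r: "0 < r" "r < 1" unfolding r_def using \<eta> by auto
  have D: "D > 0" unfolding D_def using \<delta> n by simp
  have "summable (\<lambda>t. real (t + 2) * Max ((\<lambda>v. pW V E W (t + 1) v) ` V))
      \<and> (\<Sum>t. real (t + 2) * Max ((\<lambda>v. pW V E W (t + 1) v) ` V))
          \<le> 1 / (r * D) * (1 / (1 - r)^2 + 1 / (1 - r))"
    using max_killed_walk_return_le[OF G mindeg \<delta> \<eta>(1) _ dir_\<eta>] \<eta>(2) r D
    by (intro weighted_series_le_geometric) (auto simp: r_def D_def n_def)
  moreover have "1 / (r * D) * (1 / (1 - r)^2 + 1 / (1 - r)) \<le> 16 / (D * \<eta>^2)"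
    unfolding r_def by (rule geometric_sqrt_constant_le[OF \<eta> D])
  moreover have "D * \<eta>^2 = \<delta> * sqrt \<delta> * (min c (1/2))^2"
    unfolding D_def \<eta>_def using n by (simp add: power_divide)
  ultimately show ?thesis by simp
qed

section \<open>Good decompositions\<close>

lemma powr_three_halves: "(x::real) \<ge> 0 \<Longrightarrow> x powr 1.5 = x * sqrt x"
  by (cases "x = 0") (simp_all add: powr_add[of x 1 "1/2", simplified] powr_half_sqrt)

lemma good_decomposition_part_rates:
  assumes \<delta>: "0 < \<delta>" and \<epsilon>: "0 < \<epsilon>" and n: "real (card V) \<ge> 1"
    and GD: "good_decomposition V E \<epsilon> \<delta> (real (card V) powr 1.5) \<theta> k Vs"
    and W: "\<forall>i<k. real (card (W \<inter> Vs i)) \<ge> \<epsilon>^8 * \<theta> * sqrt (real (card V))"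
    and i: "i < k"
  shows "spectral_gap E (Vs i) \<ge> \<theta> * (\<delta>^15 / 2^31) / sqrt (real (card V))"
    and "real (card (W \<inter> Vs i)) / (\<delta>^4 * real (card V) / 40)
           \<ge> \<theta> * (40 * \<epsilon>^8 / \<delta>^4) / sqrt (real (card V))"
proof -
  define n where "n = real (card V)"
  define R where "R = sqrt n"
  have R: "R \<ge> 1" "R * R = n" unfolding R_def using n n_def by auto
  have "spectral_gap E (Vs i) \<ge> \<delta>^15 * \<theta> * (n powr 1.5) / (2^31 * n^2)"
    using GD i unfolding good_decomposition_def Let_def n_def by auto
  moreover have "n powr 1.5 = n * R" unfolding R_def using powr_three_halves n n_def by simp
  ultimately have "spectral_gap E (Vs i) \<ge> \<delta>^15 * \<theta> * (n * R) / (2^31 * (R * R)^2)"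
    using R(2) by simp
  also have "\<delta>^15 * \<theta> * (n * R) / (2^31 * (R * R)^2) = \<theta> * (\<delta>^15 / 2^31) / R"
    using R n n_def by (simp add: field_simps power2_eq_square)
  finally show "spectral_gap E (Vs i) \<ge> \<theta> * (\<delta>^15 / 2^31) / sqrt (real (card V))"
    unfolding R_def n_def .
  have "real (card (W \<inter> Vs i)) / (\<delta>^4 * n / 40) \<ge> \<epsilon>^8 * \<theta> * R / (\<delta>^4 * n / 40)"
    using W i \<delta> n unfolding R_def n_def by (intro divide_right_mono) auto
  also have "\<epsilon>^8 * \<theta> * R / (\<delta>^4 * n / 40) = \<theta> * (40 * \<epsilon>^8 / \<delta>^4) / R"
    using \<delta> R by (simp add: R(2)[symmetric] field_simps)
  finally show "real (card (W \<inter> Vs i)) / (\<delta>^4 * real (card V) / 40)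
      \<ge> \<theta> * (40 * \<epsilon>^8 / \<delta>^4) / sqrt (real (card V))"
    unfolding R_def n_def .
qed

lemma good_decomposition_part_dirichlet_bound:
  assumes \<delta>: "0 < \<delta>" and \<epsilon>: "0 < \<epsilon>"
    and G: "simple_graph V E"
    and GD: "good_decomposition V E \<epsilon> \<delta> (real (card V) powr 1.5) \<theta> k Vs"
    and W: "\<forall>i<k. real (card (W \<inter> Vs i)) \<ge> \<epsilon>^8 * \<theta> * sqrt (real (card V))"
    and i: "i < k" and w0: "\<forall>x\<in>W. w x = 0"
  shows "dirichlet_form E (Vs i) w
    \<ge> \<epsilon> powr (11 * 2 powr (2 / \<delta>)) * min (\<delta>^15 / 2^31) (40 * \<epsilon>^8 / \<delta>^4)
        / (3 * sqrt (real (card V))) * (\<delta>^8 / 3200) * deg_sq_norm E (Vs i) w"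
proof -
  define n where "n = real (card V)"
  define R where "R = sqrt n"
  define b where "b = min (\<delta>^15 / 2^31) (40 * \<epsilon>^8 / \<delta>^4)"
  define \<theta>0 where "\<theta>0 = \<epsilon> powr (11 * 2 powr (2 / \<delta>))"
  define s where "s = \<delta>^4 * n / 40"
  define Wp where "Wp = W \<inter> Vs i"
  have V: "finite V" "V \<noteq> {}" and sym: "\<forall>x y. E x y \<longrightarrow> E y x"
    using G unfolding simple_graph_def by auto
  have n: "n \<ge> 1" using V unfolding n_def by (simp add: Suc_leI card_gt_0_iff)
  have R: "R \<ge> 1" unfolding R_def using n by auto
  have parts: "(\<Union>i<k. Vs i) = V" and \<theta>: "\<theta>0 \<le> \<theta>"
    and degs: "\<forall>x\<in>Vs i. real (deg_into E x (Vs i)) \<ge> s"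
    using GD i unfolding good_decomposition_def Let_def n_def \<theta>0_def s_def by auto
  have "\<theta>0 > 0" unfolding \<theta>0_def using \<epsilon> by simp
  hence \<theta>pos: "\<theta> > 0" using \<theta> by linarith
  have U: "Vs i \<subseteq> V" using parts i by auto
  have rates: "spectral_gap E (Vs i) \<ge> \<theta> * (\<delta>^15 / 2^31) / R"
      "real (card Wp) / s \<ge> \<theta> * (40 * \<epsilon>^8 / \<delta>^4) / R"
    using good_decomposition_part_rates[OF \<delta> \<epsilon> _ GD W i] n
    unfolding R_def n_def s_def Wp_def by auto
  have "real (card Wp) \<ge> \<epsilon>^8 * \<theta> * R" using W i unfolding Wp_def R_def n_def by blast
  moreover have "\<epsilon>^8 * \<theta> * R > 0" using \<epsilon> \<theta>pos R by simp
  ultimately have "Wp \<noteq> {}" by auto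
  hence "dirichlet_form E (Vs i) w \<ge> min (real (card Wp) / s) (\<theta> * (\<delta>^15 / 2^31) / R) / 3
      * (s^2 / (2 * n^2)) * deg_sq_norm E (Vs i) w"
    by (intro dirichlet_form_ge_part[OF finite_subset[OF U V(1)] sym _ _ _ _ degs _ rates(1)])
      (use w0 \<delta> n card_mono[OF V(1) U] \<theta>pos R in \<open>auto simp: Wp_def s_def n_def\<close>)
  moreover have "s^2 / (2 * n^2) = \<delta>^8 / 3200"
    using n unfolding s_def by (simp add: field_simps power2_eq_square)
  moreover have "\<theta>0 * b / (3 * R) \<le> min (real (card Wp) / s) (\<theta> * (\<delta>^15 / 2^31) / R) / 3"
  proof -
    have "\<theta>0 * b / R \<le> \<theta> * b / R"
      using \<theta> R \<delta> \<epsilon> unfolding b_def by (intro divide_right_mono mult_right_mono) auto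
    also have "\<dots> \<le> min (real (card Wp) / s) (\<theta> * (\<delta>^15 / 2^31) / R)"
    proof -
      have "\<theta> * b / R \<le> \<theta> * (\<delta>^15 / 2^31) / R" "\<theta> * b / R \<le> \<theta> * (40 * \<epsilon>^8 / \<delta>^4) / R"
        using \<theta>pos R unfolding b_def by (intro divide_right_mono mult_left_mono; simp)+
      thus ?thesis using rates(2) by simp
    qed
    finally show ?thesis by simp
  qed
  ultimately show ?thesis
    using deg_sq_norm_nonneg[of E "Vs i" w] \<delta> unfolding \<theta>0_def b_def R_def n_def
    by (smt (verit) mult_right_mono zero_le_power divide_nonneg_nonneg)
qed

text \<open>Each part has spectral gap at least theta (delta^15 / 2^31) / sqrt n and at least
  theta (40 eps^8 / delta^4) / sqrt n vertices of W per unit of its minimal degree, where theta is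
  at least eps powr (11 * 2 powr (2 / delta)); the factors 1/3, (delta^4 / 40)^2 / 2 and
  delta^4 / 40 from the part and gluing lemmas make up delta^12 / 384000.\<close>
definition relative_gap :: "real \<Rightarrow> real \<Rightarrow> real" where
  "relative_gap \<delta> \<epsilon> =
     \<epsilon> powr (11 * 2 powr (2 / \<delta>)) * min (\<delta>^15 / 2^31) (40 * \<epsilon>^8 / \<delta>^4) * \<delta>^12 / 384000"

lemma good_decomposition_dirichlet_bound:
  assumes \<delta>: "0 < \<delta>" and \<epsilon>: "0 < \<epsilon>"
    and G: "simple_graph V E"
    and GD: "good_decomposition V E \<epsilon> \<delta> (real (card V) powr 1.5) \<theta> k Vs"
    and W: "\<forall>i<k. real (card (W \<inter> Vs i)) \<ge> \<epsilon>^8 * \<theta> * sqrt (real (card V))"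
    and w0: "\<forall>x\<in>W. w x = 0"
  shows "dirichlet_form E V w \<ge> relative_gap \<delta> \<epsilon> / sqrt (real (card V)) * deg_sq_norm E V w"
proof -
  define c where "c = \<epsilon> powr (11 * 2 powr (2 / \<delta>)) * min (\<delta>^15 / 2^31) (40 * \<epsilon>^8 / \<delta>^4)
    / (3 * sqrt (real (card V))) * (\<delta>^8 / 3200)"
  have V: "finite V" using G unfolding simple_graph_def by auto
  have parts: "(\<Union>i<k. Vs i) = V" and disj: "\<forall>i<k. \<forall>j<k. i \<noteq> j \<longrightarrow> Vs i \<inter> Vs j = {}"
    and degs: "\<forall>i<k. \<forall>x\<in>Vs i. real (deg_into E x (Vs i)) \<ge> \<delta>^4 * real (card V) / 40"
    using GD unfolding good_decomposition_def Let_def by auto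
  have ratio: "\<forall>i<k. \<forall>x\<in>Vs i. real (deg_into E x (Vs i)) \<ge> \<delta>^4 / 40 * real (deg_into E x V)"
  proof (intro allI impI ballI)
    fix i x assume "i < k" "x \<in> Vs i"
    have "\<delta>^4 / 40 * real (deg_into E x V) \<le> \<delta>^4 / 40 * real (card V)"
      using deg_into_le_card[OF V] \<delta> by (intro mult_left_mono) auto
    also have "\<dots> \<le> real (deg_into E x (Vs i))" using degs \<open>i < k\<close> \<open>x \<in> Vs i\<close> by auto
    finally show "real (deg_into E x (Vs i)) \<ge> \<delta>^4 / 40 * real (deg_into E x V)" .
  qed
  have "c \<ge> 0" unfolding c_def using \<delta> \<epsilon> by auto
  hence "dirichlet_form E V w \<ge> c * (\<delta>^4 / 40) * deg_sq_norm E V w"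
    using good_decomposition_part_dirichlet_bound[OF \<delta> \<epsilon> G GD W _ w0]
    by (intro dirichlet_form_ge_of_parts[OF V parts disj _ ratio]) (auto simp: c_def)
  moreover have "c * (\<delta>^4 / 40) = relative_gap \<delta> \<epsilon> / sqrt (real (card V))"
    unfolding c_def relative_gap_def by (simp add: field_simps power_add[symmetric])
  ultimately show ?thesis by (simp only:)
qed

definition return_series_bound :: "real \<Rightarrow> real \<Rightarrow> real" where
  "return_series_bound \<delta> \<epsilon> = 16 / (\<delta> * sqrt \<delta> * (min (relative_gap \<delta> \<epsilon>) (1/2))^2)"

lemma return_series_le_of_good_decomposition:
  assumes \<delta>: "0 < \<delta>" and \<epsilon>: "0 < \<epsilon>"
    and G: "simple_graph V E"
    and mindeg: "\<forall>v\<in>V. real (deg_into E v V) \<ge> \<delta> * real (card V)"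
    and GD: "good_decomposition V E \<epsilon> \<delta> (real (card V) powr 1.5) \<theta> k Vs"
    and W: "\<forall>i<k. real (card (W \<inter> Vs i)) \<ge> \<epsilon>^8 * \<theta> * sqrt (real (card V))"
  shows "summable (\<lambda>t. real (t + 2) * Max ((\<lambda>v. pW V E W (t + 1) v) ` V))
    \<and> (\<Sum>t. real (t + 2) * Max ((\<lambda>v. pW V E W (t + 1) v) ` V)) \<le> return_series_bound \<delta> \<epsilon>"
  unfolding return_series_bound_def
  by (rule killed_walk_return_series_le[OF G mindeg \<delta>])
    (use \<delta> \<epsilon> good_decomposition_dirichlet_bound[OF \<delta> \<epsilon> G GD W] in \<open>auto simp: relative_gap_def\<close>)

theorem lemma4p2:
  "\<forall>\<delta>::real. 0 < \<delta> \<and> \<delta> \<le> 1 \<longrightarrow>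
    (\<exists>b>0. \<forall>\<epsilon>::real. 0 < \<epsilon> \<and> \<epsilon> < b \<longrightarrow>
      (\<exists>C::real. \<exists>c::real. c > 0 \<and>
        (\<forall>(V::nat set) E \<theta> k Vs W.
           simple_graph V E \<and> connected_graph V E \<and>
           (\<forall>v\<in>V. real (deg_into E v V) \<ge> \<delta> * real (card V)) \<and>
           good_decomposition V E \<epsilon> \<delta> (real (card V) powr 1.5) \<theta> k Vs \<and>
           W \<subseteq> V \<and>
           (\<forall>i<k. real (card (W \<inter> Vs i)) \<ge> \<epsilon>^8 * \<theta> * sqrt (real (card V)))
           \<longrightarrow> summable (\<lambda>t. real (t + 2) * Max ((\<lambda>v. pW V E W (t + 1) v) ` V)) \<and>
               (\<Sum>t. real (t + 2) * Max ((\<lambda>v. pW V E W (t + 1) v) ` V)) \<le> C)))"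
  apply (intro allI impI)
  apply (rule exI[of _ 1])
  apply (intro conjI allI impI)
   apply simp
  subgoal for \<delta> \<epsilon>
    apply (rule exI[of _ "return_series_bound \<delta> \<epsilon>"], rule exI[of _ 1])
    using return_series_le_of_good_decomposition by fastforce
  done

end
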